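(* Let $d\geq 3$ and $n\geq 6$ be integers, and let $r$ be an integer. If $r<d+n$, then a general form of degree $d$ in $n+1$ variables has no apolar star configuration $\mathbb{X}(r)\subset\mathbb{P}^n$. If $r\geq d+n$, then a general form of degree $d$ in $n+1$ variables has an apolar star configuration $\mathbb{X}(r)$.
   Context: Let $S=\mathbb{C}[x_0,\dots,x_n]$ and $T=\mathbb{C}[y_0,\dots,y_n]$, where $T$ acts on $S$ by differentiation, $y_j=\partial/\partial x_j$. For a form $F\in S$, $F^\perp=\{\partial\in T:\partial F=0\}$. A finite set of points $\mathbb{X}\subset\mathbb{P}^n=\mathbb{P}(S_1)$ with defining ideal $I(\mathbb{X})\subseteq T$ is apolar to $F$ if $I(\mathbb{X})\subseteq F^\perp$. A star configuration $\mathbb{X}(r)\subset\mathbb{P}^n$: take $r$ linear forms $l_1,\dots,l_r\in T_1$ such that any $n+1$ of them are linearly independent; $\mathbb{X}(r)$ is the set of $\binom{r}{n}$ points obtained by intersecting the hyperplanes $\{l_i=0\}$ $n$ at a time in all possible ways. "A general form has (resp. has no) apolar $\mathbb{X}(r)$" means that all forms in some nonempty Zariski open subset of degree $d$ forms have (resp. have no) apolar star configuration $\mathbb{X}(r)$. *)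

theory Defs
  imports Complex_Main
begin

text \<open>Polynomials in the variables with indices 0..n are represented by their
coefficient functions on exponent vectors (nat \<Rightarrow> nat), with finite support
contained in the exponent vectors using only the variables 0..n.
The same representation is used for S = C[x_0..x_n] and T = C[y_0..y_n].\<close>

type_synonym expo = "nat \<Rightarrow> nat"
type_synonym cpoly = "expo \<Rightarrow> complex"

definition mons :: "nat \<Rightarrow> expo set" where
  "mons n = {\<alpha>. \<forall>i>n. \<alpha> i = 0}"

definition mdeg :: "nat \<Rightarrow> expo \<Rightarrow> nat" where
  "mdeg n \<alpha> = (\<Sum>i\<le>n. \<alpha> i)"

definition supp :: "cpoly \<Rightarrow> expo set" where
  "supp c = {\<alpha>. c \<alpha> \<noteq> 0}"

definition polys :: "nat \<Rightarrow> cpoly set" where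
  "polys n = {c. finite (supp c) \<and> supp c \<subseteq> mons n}"

definition forms :: "nat \<Rightarrow> nat \<Rightarrow> cpoly set" where
  "forms n d = {c. c \<in> polys n \<and> (\<forall>\<alpha>\<in>supp c. mdeg n \<alpha> = d)}"

definition peval :: "nat \<Rightarrow> cpoly \<Rightarrow> (nat \<Rightarrow> complex) \<Rightarrow> complex" where
  "peval n c v = (\<Sum>\<alpha>\<in>supp c. c \<alpha> * (\<Prod>i\<le>n. v i ^ \<alpha> i))"

text \<open>Action of T on S by differentiation, y_j = d/dx_j:
  y^\<beta> applied to x^(\<beta>+\<gamma>) gives ((\<beta>+\<gamma>)!/\<gamma>!) x^\<gamma>.
  The result is given by its coefficient function.\<close>
definition contract :: "nat \<Rightarrow> cpoly \<Rightarrow> cpoly \<Rightarrow> cpoly" where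
  "contract n g F = (\<lambda>\<gamma>. \<Sum>\<beta>\<in>supp g. g \<beta> * F (\<lambda>i. \<beta> i + \<gamma> i) *
      (\<Prod>i\<le>n. of_nat (fact (\<beta> i + \<gamma> i)) / of_nat (fact (\<gamma> i))))"

definition perp :: "nat \<Rightarrow> cpoly \<Rightarrow> cpoly set" where
  "perp n F = {g \<in> polys n. \<forall>\<gamma>. contract n g F \<gamma> = 0}"

text \<open>Vanishing ideal in T of a set of points of P^n, the points being given
  by the affine cone Z over them (a subset of C^(n+1)).\<close>
definition vanishing_ideal :: "nat \<Rightarrow> (nat \<Rightarrow> complex) set \<Rightarrow> cpoly set" where
  "vanishing_ideal n Z = {g \<in> polys n. \<forall>v\<in>Z. peval n g v = 0}"

definition lin :: "nat \<Rightarrow> (nat \<Rightarrow> complex) \<Rightarrow> (nat \<Rightarrow> complex) \<Rightarrow> complex" where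
  "lin n l v = (\<Sum>j\<le>n. l j * v j)"

definition lin_indep_on :: "nat \<Rightarrow> (nat \<Rightarrow> nat \<Rightarrow> complex) \<Rightarrow> nat set \<Rightarrow> bool" where
  "lin_indep_on n l S \<longleftrightarrow>
     (\<forall>c. (\<forall>j\<le>n. (\<Sum>i\<in>S. c i * l i j) = 0) \<longrightarrow> (\<forall>i\<in>S. c i = 0))"

definition star_data :: "nat \<Rightarrow> nat \<Rightarrow> (nat \<Rightarrow> nat \<Rightarrow> complex) \<Rightarrow> bool" where
  "star_data n r l \<longleftrightarrow>
     (\<forall>S\<subseteq>{..<r}. card S \<le> n + 1 \<longrightarrow> lin_indep_on n l S)"

text \<open>Affine cone over the star configuration X(r): the points obtained by
  intersecting the hyperplanes l_i = 0, n at a time.\<close>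
definition star_cone :: "nat \<Rightarrow> nat \<Rightarrow> (nat \<Rightarrow> nat \<Rightarrow> complex) \<Rightarrow> (nat \<Rightarrow> complex) set" where
  "star_cone n r l = {v. (\<forall>j>n. v j = 0) \<and>
     (\<exists>S\<subseteq>{..<r}. card S = n \<and> (\<forall>i\<in>S. lin n (l i) v = 0))}"

definition has_apolar_star :: "nat \<Rightarrow> nat \<Rightarrow> cpoly \<Rightarrow> bool" where
  "has_apolar_star n r F \<longleftrightarrow>
     (\<exists>l. star_data n r l \<and> vanishing_ideal n (star_cone n r l) \<subseteq> perp n F)"

definition polyfun_on_forms :: "nat \<Rightarrow> nat \<Rightarrow> (cpoly \<Rightarrow> complex) \<Rightarrow> bool" where
  "polyfun_on_forms n d \<phi> \<longleftrightarrow>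
     (\<exists>E c. finite E \<and> (\<forall>F\<in>forms n d.
        \<phi> F = (\<Sum>e\<in>E. c e * (\<Prod>\<alpha>\<in>{\<alpha>\<in>mons n. mdeg n \<alpha> = d}. F \<alpha> ^ e \<alpha>))))"

definition zariski_open_forms :: "nat \<Rightarrow> nat \<Rightarrow> cpoly set \<Rightarrow> bool" where
  "zariski_open_forms n d U \<longleftrightarrow>
     (\<exists>H. (\<forall>\<phi>\<in>H. polyfun_on_forms n d \<phi>) \<and>
          U = {F\<in>forms n d. \<exists>\<phi>\<in>H. \<phi> F \<noteq> 0})"

definition general_form :: "nat \<Rightarrow> nat \<Rightarrow> (cpoly \<Rightarrow> bool) \<Rightarrow> bool" where
  "general_form n d P \<longleftrightarrow>
     (\<exists>U. zariski_open_forms n d U \<and> U \<noteq> {} \<and> (\<forall>F\<in>U. P F))"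

end

theory Submission
  imports Defs "Jordan_Normal_Form.Determinant" "HOL-Computational_Algebra.Fundamental_Theorem_Algebra"
begin

text \<open>
  For \<open>r \<ge> d + n\<close> a single star configuration serves every form: the one cut out by the
  Vandermonde forms \<open>l\<^sub>i = y\<^sub>0 + i y\<^sub>1 + \<dots> + i\<^sup>n y\<^sub>n\<close>. Its points include the coefficient vectors of
  \<open>\<Prod>\<^sub>k (t - s\<^sub>k)\<close> for distinct nodes \<open>s\<^sub>k \<in> {0..<r}\<close>; a form of degree \<open>e \<le> r - n\<close> vanishing there
  vanishes, by interpolation one node at a time, at every vector with last coordinate 1 (the
  coefficients of a monic polynomial, which splits) and hence at every vector. So
  \<open>I(X(r))\<close> has no elements of degree \<open>\<le> r - n\<close> and annihilates every form of degree \<open>d \<le> r - n\<close>.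

  For \<open>r < d + n\<close>, the apolarity lemma writes a form with an apolar \<open>X(r)\<close> as a combination of the
  \<open>d\<close>-th powers of the \<open>C(r, n)\<close> points of \<open>X(r)\<close>, whose coordinates are cofactors, hence
  polynomials in the coefficients of the \<open>l\<^sub>i\<close>. After normalising one coefficient of each \<open>l\<^sub>i\<close>,
  these forms lie in the images of finitely many polynomial maps in at most \<open>r n + C(r, n)\<close>
  variables, fewer than \<open>dim S\<^sub>d = C(n + d, n)\<close> when \<open>d \<ge> 3\<close> and \<open>n \<ge> 6\<close>. Counting monomials
  yields a nonzero polynomial on \<open>S\<^sub>d\<close> vanishing on all these images; where it does not vanish,
  no \<open>X(r)\<close> is apolar.
\<close>

section \<open>Linear algebra\<close>

lemma underdetermined_system_nontrivial_solution:
  fixes a :: "'q \<Rightarrow> 'u \<Rightarrow> 'a::field"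
  assumes "finite Q" "finite U" "card Q < card U"
  shows "\<exists>x. (\<exists>u\<in>U. x u \<noteq> 0) \<and> (\<forall>q\<in>Q. (\<Sum>u\<in>U. a q u * x u) = 0)"
  using assms
proof (induction Q arbitrary: U a rule: finite_induct)
  case empty
  then obtain u0 where "u0 \<in> U" by fastforce
  then show ?case by (intro exI[of _ "\<lambda>u. if u = u0 then 1 else 0"]) auto
next
  case (insert q Q U a)
  show ?case
  proof (cases "\<forall>u\<in>U. a q u = 0")
    case True
    from insert.IH[of U a] insert.prems insert.hyps obtain x where
      x: "\<exists>u\<in>U. x u \<noteq> 0" "\<forall>q\<in>Q. (\<Sum>u\<in>U. a q u * x u) = 0" by auto
    show ?thesis using x True by (intro exI[of _ x]) auto
  next
    case False
    then obtain u0 where u0: "u0 \<in> U" "a q u0 \<noteq> 0" by auto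
    \<comment> \<open>Gaussian elimination: remove the unknown \<open>u0\<close> using equation \<open>q\<close>.\<close>
    define U' where "U' = U - {u0}"
    define a' where "a' = (\<lambda>q' u. a q' u - a q' u0 * a q u / a q u0)"
    have "card Q < card U'" using insert.prems insert.hyps u0 unfolding U'_def by auto
    then obtain x' where x': "\<exists>u\<in>U'. x' u \<noteq> 0" "\<forall>q\<in>Q. (\<Sum>u\<in>U'. a' q u * x' u) = 0"
      using insert.IH[of U' a'] insert.prems unfolding U'_def by auto
    define x where "x = (\<lambda>u. if u = u0 then -(\<Sum>u\<in>U'. a q u * x' u) / a q u0 else x' u)"
    have split: "(\<Sum>u\<in>U. f u) = f u0 + (\<Sum>u\<in>U'. f u)" for f :: "'u \<Rightarrow> 'a"
      using u0 insert.prems unfolding U'_def by (simp add: sum.remove)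
    have x_U': "(\<Sum>u\<in>U'. g u * x u) = (\<Sum>u\<in>U'. g u * x' u)" for g
      by (rule sum.cong) (auto simp: x_def U'_def)
    have eq_q: "(\<Sum>u\<in>U. a q u * x u) = 0"
      unfolding split x_U' using u0 by (simp add: x_def)
    have eq_Q: "(\<Sum>u\<in>U. a q' u * x u) = 0" if "q' \<in> Q" for q'
    proof -
      have "0 = (\<Sum>u\<in>U'. a' q' u * x' u)" using x' that by auto
      also have "\<dots> = (\<Sum>u\<in>U'. a q' u * x' u) - a q' u0 / a q u0 * (\<Sum>u\<in>U'. a q u * x' u)"
        unfolding a'_def by (simp add: algebra_simps sum_subtractf sum_distrib_left)
      also have "\<dots> = (\<Sum>u\<in>U. a q' u * x u)"
        unfolding split x_U' using u0 by (simp add: x_def)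
      finally show ?thesis by simp
    qed
    have "\<exists>u\<in>U. x u \<noteq> 0" using x' unfolding U'_def x_def by auto
    then show ?thesis using eq_q eq_Q by (intro exI[of _ x]) auto
  qed
qed

lemma in_span_or_separating_functional_insert:
  fixes w :: "'s \<Rightarrow> 'b \<Rightarrow> 'a::field" and F :: "'b \<Rightarrow> 'a"
  assumes "finite S" "s \<notin> S"
    and h0_S: "\<forall>s'\<in>S. (\<Sum>b\<in>B. h0 b * w s' b) = 0" and h0_s: "(\<Sum>b\<in>B. h0 b * w s b) \<noteq> 0"
    and IH: "\<And>G. (\<exists>c. \<forall>b\<in>B. G b = (\<Sum>s'\<in>S. c s' * w s' b)) \<or>
      (\<exists>h. (\<forall>s'\<in>S. (\<Sum>b\<in>B. h b * w s' b) = 0) \<and> (\<Sum>b\<in>B. h b * G b) \<noteq> 0)"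
  shows "(\<exists>c. \<forall>b\<in>B. F b = (\<Sum>s'\<in>insert s S. c s' * w s' b)) \<or>
    (\<exists>h. (\<forall>s'\<in>insert s S. (\<Sum>b\<in>B. h b * w s' b) = 0) \<and> (\<Sum>b\<in>B. h b * F b) \<noteq> 0)"
proof -
  \<comment> \<open>Apply the hypothesis to \<open>F\<close> corrected along \<open>w s\<close>, so that \<open>h0\<close> kills it.\<close>
  define lam where "lam = (\<Sum>b\<in>B. h0 b * F b) / (\<Sum>b\<in>B. h0 b * w s b)"
  define F' where "F' = (\<lambda>b. F b - lam * w s b)"
  from IH[of F'] show ?thesis
  proof
    assume "\<exists>c. \<forall>b\<in>B. F' b = (\<Sum>s'\<in>S. c s' * w s' b)"
    then obtain c where c: "\<forall>b\<in>B. F' b = (\<Sum>s'\<in>S. c s' * w s' b)" by auto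
    have "(\<Sum>s'\<in>S. (c(s := lam)) s' * w s' b) = (\<Sum>s'\<in>S. c s' * w s' b)" for b
      using assms(2) by (intro sum.cong) auto
    then have "\<forall>b\<in>B. F b = (\<Sum>s'\<in>insert s S. (c(s := lam)) s' * w s' b)"
      using c assms(1,2) by (auto simp: F'_def algebra_simps)
    then show ?thesis by blast
  next
    assume "\<exists>h. (\<forall>s'\<in>S. (\<Sum>b\<in>B. h b * w s' b) = 0) \<and> (\<Sum>b\<in>B. h b * F' b) \<noteq> 0"
    then obtain h1 where h1: "\<forall>s'\<in>S. (\<Sum>b\<in>B. h1 b * w s' b) = 0" "(\<Sum>b\<in>B. h1 b * F' b) \<noteq> 0"
      by auto
    define \<mu> where "\<mu> = (\<Sum>b\<in>B. h1 b * w s b) / (\<Sum>b\<in>B. h0 b * w s b)"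
    define h where "h = (\<lambda>b. h1 b - \<mu> * h0 b)"
    have lin: "(\<Sum>b\<in>B. h b * g b) = (\<Sum>b\<in>B. h1 b * g b) - \<mu> * (\<Sum>b\<in>B. h0 b * g b)" for g
      unfolding h_def by (simp add: algebra_simps sum_subtractf sum_distrib_left)
    have "(\<Sum>b\<in>B. h b * w s b) = 0" unfolding lin \<mu>_def using h0_s by simp
    moreover have "(\<Sum>b\<in>B. h b * w s' b) = 0" if "s' \<in> S" for s'
      unfolding lin using h0_S h1 that by simp
    moreover have "(\<Sum>b\<in>B. h b * F b) = (\<Sum>b\<in>B. h1 b * F' b)"
    proof -
      have "(\<Sum>b\<in>B. h1 b * F' b) = (\<Sum>b\<in>B. h1 b * F b) - lam * (\<Sum>b\<in>B. h1 b * w s b)"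
        unfolding F'_def by (simp add: algebra_simps sum_subtractf sum_distrib_left)
      then show ?thesis unfolding lin \<mu>_def lam_def using h0_s by (simp add: field_simps)
    qed
    ultimately show ?thesis using h1 by (intro disjI2 exI[of _ h]) auto
  qed
qed

lemma in_span_or_separating_functional:
  fixes w :: "'s \<Rightarrow> 'b \<Rightarrow> 'a::field" and F :: "'b \<Rightarrow> 'a"
  assumes "finite S" "finite B"
  shows "(\<exists>c. \<forall>b\<in>B. F b = (\<Sum>s\<in>S. c s * w s b)) \<or>
         (\<exists>h. (\<forall>s\<in>S. (\<Sum>b\<in>B. h b * w s b) = 0) \<and> (\<Sum>b\<in>B. h b * F b) \<noteq> 0)"
  using assms
proof (induction S arbitrary: F rule: finite_induct)
  case empty
  show ?case
  proof (cases "\<forall>b\<in>B. F b = 0")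
    case False
    then obtain b0 where b0: "b0 \<in> B" "F b0 \<noteq> 0" by auto
    have "(\<Sum>b\<in>B. of_bool (b = b0) * F b) = F b0"
      using b0 empty by simp
    then show ?thesis using b0 by (intro disjI2 exI[of _ "\<lambda>b. of_bool (b = b0)"]) auto
  qed auto
next
  case (insert s S F)
  from insert.IH[OF insert.prems, of F] show ?case
  proof
    assume "\<exists>c. \<forall>b\<in>B. F b = (\<Sum>s\<in>S. c s * w s b)"
    then obtain c where c: "\<forall>b\<in>B. F b = (\<Sum>s\<in>S. c s * w s b)" by auto
    have "\<forall>b\<in>B. F b = (\<Sum>s'\<in>insert s S. (c(s := 0)) s' * w s' b)"
      using c insert.hyps by (auto intro!: sum.cong)
    then show ?thesis by blast
  next
    assume "\<exists>h. (\<forall>s\<in>S. (\<Sum>b\<in>B. h b * w s b) = 0) \<and> (\<Sum>b\<in>B. h b * F b) \<noteq> 0"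
    then obtain h0 where h0: "\<forall>s\<in>S. (\<Sum>b\<in>B. h0 b * w s b) = 0" "(\<Sum>b\<in>B. h0 b * F b) \<noteq> 0"
      by auto
    show ?thesis
    proof (cases "(\<Sum>b\<in>B. h0 b * w s b) = 0")
      case True
      then show ?thesis using h0 by auto
    next
      case False
      show ?thesis
        by (rule in_span_or_separating_functional_insert[OF insert.hyps h0(1) False insert.IH[OF insert.prems]])
    qed
  qed
qed

section \<open>Polynomial functions in finitely many variables\<close>

definition mono_val :: "'v set \<Rightarrow> ('v \<Rightarrow> nat) \<Rightarrow> ('v \<Rightarrow> 'a::comm_semiring_1) \<Rightarrow> 'a" where
  "mono_val A e x = (\<Prod>a\<in>A. x a ^ e a)"

definition exps_le :: "'v set \<Rightarrow> nat \<Rightarrow> ('v \<Rightarrow> nat) set" where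
  "exps_le A k = {e. (\<forall>a. a \<notin> A \<longrightarrow> e a = 0) \<and> sum e A \<le> k}"

definition exps_box :: "'v set \<Rightarrow> nat \<Rightarrow> ('v \<Rightarrow> nat) set" where
  "exps_box A k = {e. \<forall>a. (a \<in> A \<longrightarrow> e a \<le> k) \<and> (a \<notin> A \<longrightarrow> e a = 0)}"

definition poly_fun :: "'v set \<Rightarrow> nat \<Rightarrow> (('v \<Rightarrow> 'a) \<Rightarrow> 'a::comm_semiring_1) \<Rightarrow> bool" where
  "poly_fun A k f \<longleftrightarrow> (\<exists>c. \<forall>x. f x = (\<Sum>e\<in>exps_le A k. c e * mono_val A e x))"

lemma finite_exps_box: "finite A \<Longrightarrow> finite (exps_box A k)"
  unfolding exps_box_def using finite_set_of_finite_funs[of A "{..k}" 0] by simp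

lemma exps_le_subset_box:
  assumes "finite A"
  shows "exps_le A k \<subseteq> exps_box A k"
proof
  fix e assume e: "e \<in> exps_le A k"
  have "e a \<le> k" if "a \<in> A" for a
    using member_le_sum[OF that _ assms, of e] e by (auto simp: exps_le_def)
  then show "e \<in> exps_box A k" using e by (auto simp: exps_box_def exps_le_def)
qed

lemma finite_exps_le: "finite A \<Longrightarrow> finite (exps_le A k)"
  using finite_subset[OF exps_le_subset_box finite_exps_box] by blast

lemma card_exps_box:
  assumes "finite A"
  shows "card (exps_box A k) = (k + 1) ^ card A"
proof -
  have "bij_betw (\<lambda>e. restrict e A) (exps_box A k) (PiE A (\<lambda>_. {..k}))"
  proof (rule bij_betw_byWitness[where f' = "\<lambda>f a. if a \<in> A then f a else 0"])
    show "\<forall>e\<in>exps_box A k. (\<lambda>a. if a \<in> A then restrict e A a else 0) = e"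
      by (auto simp: exps_box_def fun_eq_iff)
    show "\<forall>f\<in>PiE A (\<lambda>_. {..k}). restrict (\<lambda>a. if a \<in> A then f a else 0) A = f"
      by (auto simp: fun_eq_iff PiE_def extensional_def)
  qed (auto simp: exps_box_def PiE_def Pi_def)
  then have "card (exps_box A k) = card (PiE A (\<lambda>_. {..k}))" by (rule bij_betw_same_card)
  also have "\<dots> = (k + 1) ^ card A" using assms by (simp add: card_PiE)
  finally show ?thesis .
qed

lemma card_exps_le_upper: "finite A \<Longrightarrow> card (exps_le A k) \<le> (k + 1) ^ card A"
  using card_mono[OF finite_exps_box exps_le_subset_box] card_exps_box by metis

lemma exps_box_subset_exps_le: "exps_box A t \<subseteq> exps_le A (card A * t)"
  unfolding exps_box_def exps_le_def using sum_bounded_above[of A _ t] by auto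

lemma card_exps_le_lower: "finite A \<Longrightarrow> (t + 1) ^ card A \<le> card (exps_le A (card A * t))"
  using card_mono[OF finite_exps_le exps_box_subset_exps_le] card_exps_box by metis

lemma mono_val_cong: "(\<And>a. a \<in> A \<Longrightarrow> x a = y a) \<Longrightarrow> mono_val A e x = mono_val A e y"
  unfolding mono_val_def by (rule prod.cong) auto

lemma mono_val_add: "mono_val A (\<lambda>a. e a + e' a) x = mono_val A e x * mono_val A e' x"
  unfolding mono_val_def by (simp add: power_add prod.distrib)

lemma mono_val_insert: "finite A \<Longrightarrow> a \<notin> A \<Longrightarrow> mono_val (insert a A) e x = x a ^ e a * mono_val A e x"
  unfolding mono_val_def by simp

lemma poly_fun_mono:
  assumes "finite A" "poly_fun A k f" "k \<le> k'"
  shows "poly_fun A k' f"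
proof -
  obtain c where c: "\<And>x. f x = (\<Sum>e\<in>exps_le A k. c e * mono_val A e x)"
    using assms by (auto simp: poly_fun_def)
  have sub: "exps_le A k \<subseteq> exps_le A k'" using assms by (auto simp: exps_le_def)
  have "f x = (\<Sum>e\<in>exps_le A k'. (of_bool (e \<in> exps_le A k) * c e) * mono_val A e x)" for x
    unfolding c by (rule sum.mono_neutral_cong_left) (use sub finite_exps_le assms(1) in auto)
  then show ?thesis unfolding poly_fun_def by (intro exI[of _ "\<lambda>e. of_bool (e \<in> exps_le A k) * c e"]) auto
qed

lemma poly_fun_const:
  assumes "finite A"
  shows "poly_fun A k (\<lambda>x. a)"
proof -
  have "(\<lambda>_. 0) \<in> exps_le A k" by (auto simp: exps_le_def)
  then have "(\<Sum>e\<in>exps_le A k. (of_bool (e = (\<lambda>_. 0)) * a) * mono_val A e x) = a" for x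
    using finite_exps_le[OF assms] by (simp add: mono_val_def mult.assoc)
  then show ?thesis unfolding poly_fun_def by (intro exI[of _ "\<lambda>e. of_bool (e = (\<lambda>_. 0)) * a"]) auto
qed

lemma poly_fun_var:
  fixes A :: "'v set"
  assumes "finite A" "a \<in> A" "1 \<le> k"
  shows "poly_fun A k (\<lambda>x :: 'v \<Rightarrow> 'a::comm_semiring_1. x a)"
proof -
  define u where "u = (\<lambda>b. of_bool (b = a) :: nat)"
  have "u \<in> exps_le A k" using assms by (auto simp: exps_le_def u_def)
  moreover have "mono_val A u x = x a" for x :: "'v \<Rightarrow> 'a"
    using assms unfolding mono_val_def u_def by (simp add: of_bool_def if_distrib prod.delta cong: if_cong)
  ultimately have "(\<Sum>e\<in>exps_le A k. of_bool (e = u) * mono_val A e x) = x a" for x :: "'v \<Rightarrow> 'a"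
    using finite_exps_le[OF assms(1)] by simp
  then show ?thesis unfolding poly_fun_def by (intro exI[of _ "\<lambda>e. of_bool (e = u)"]) simp
qed

lemma poly_fun_add:
  assumes "poly_fun A k f" "poly_fun A k g"
  shows "poly_fun A k (\<lambda>x. f x + g x)"
proof -
  obtain c where c: "\<And>x. f x = (\<Sum>e\<in>exps_le A k. c e * mono_val A e x)"
    using assms by (auto simp: poly_fun_def)
  obtain c' where c': "\<And>x. g x = (\<Sum>e\<in>exps_le A k. c' e * mono_val A e x)"
    using assms by (auto simp: poly_fun_def)
  have "f x + g x = (\<Sum>e\<in>exps_le A k. (c e + c' e) * mono_val A e x)" for x
    unfolding c c' by (simp add: sum.distrib algebra_simps)
  then show ?thesis unfolding poly_fun_def by (intro exI[of _ "\<lambda>e. c e + c' e"]) auto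
qed

lemma poly_fun_cmult:
  assumes "poly_fun A k f"
  shows "poly_fun A k (\<lambda>x. a * f x)"
proof -
  obtain c where c: "\<And>x. f x = (\<Sum>e\<in>exps_le A k. c e * mono_val A e x)"
    using assms by (auto simp: poly_fun_def)
  have "a * f x = (\<Sum>e\<in>exps_le A k. (a * c e) * mono_val A e x)" for x
    unfolding c by (simp add: sum_distrib_left algebra_simps)
  then show ?thesis unfolding poly_fun_def by (intro exI[of _ "\<lambda>e. a * c e"]) auto
qed

lemma poly_fun_sum:
  assumes "finite A" "finite I" "\<And>i. i \<in> I \<Longrightarrow> poly_fun A k (f i)"
  shows "poly_fun A k (\<lambda>x. \<Sum>i\<in>I. f i x)"
  using assms(2,3) by (induction I rule: finite_induct) (auto intro: poly_fun_add poly_fun_const[OF assms(1)])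

lemma poly_fun_mult:
  assumes A: "finite A" and "poly_fun A k f" "poly_fun A k' g"
  shows "poly_fun A (k + k') (\<lambda>x. f x * g x)"
proof -
  obtain c where c: "\<And>x. f x = (\<Sum>e\<in>exps_le A k. c e * mono_val A e x)"
    using assms by (auto simp: poly_fun_def)
  obtain c' where c': "\<And>x. g x = (\<Sum>e\<in>exps_le A k'. c' e * mono_val A e x)"
    using assms by (auto simp: poly_fun_def)
  let ?P = "exps_le A k \<times> exps_le A k'"
  let ?s = "\<lambda>p a. fst p a + snd p a"
  have fin_P: "finite ?P" using finite_exps_le[OF A] by auto
  have img: "?s ` ?P \<subseteq> exps_le A (k + k')"
    by (auto simp: exps_le_def sum.distrib add_mono)
  define cc where "cc = (\<lambda>e. \<Sum>p\<in>{p\<in>?P. ?s p = e}. c (fst p) * c' (snd p))"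
  have "f x * g x = (\<Sum>e\<in>exps_le A (k + k'). cc e * mono_val A e x)" for x
  proof -
    have "f x * g x = (\<Sum>p\<in>?P. c (fst p) * c' (snd p) * mono_val A (?s p) x)"
      unfolding c c' sum_product sum.cartesian_product mono_val_add by (rule sum.cong) (auto simp: mult_ac)
    also have "\<dots> = (\<Sum>e\<in>exps_le A (k + k').
        \<Sum>p\<in>{p\<in>?P. ?s p = e}. c (fst p) * c' (snd p) * mono_val A (?s p) x)"
      by (rule sum.group[symmetric, OF fin_P finite_exps_le[OF A] img])
    also have "\<dots> = (\<Sum>e\<in>exps_le A (k + k'). cc e * mono_val A e x)"
      unfolding cc_def sum_distrib_right by (intro sum.cong refl) auto
    finally show ?thesis .
  qed
  then show ?thesis unfolding poly_fun_def by (intro exI[of _ cc]) auto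
qed

lemma poly_fun_prod:
  assumes A: "finite A" and "finite I" "\<And>i. i \<in> I \<Longrightarrow> poly_fun A (k i) (f i)"
  shows "poly_fun A (\<Sum>i\<in>I. k i) (\<lambda>x. \<Prod>i\<in>I. f i x)"
  using assms(2,3)
proof (induction I rule: finite_induct)
  case empty
  then show ?case by (simp add: poly_fun_const[OF A])
next
  case (insert i I)
  then show ?case using poly_fun_mult[OF A, of "k i" "f i" "\<Sum>i\<in>I. k i"] by simp
qed

lemma poly_fun_power:
  assumes "finite A" "poly_fun A k f"
  shows "poly_fun A (k * m) (\<lambda>x. f x ^ m)"
  using poly_fun_prod[OF assms(1), of "{..<m}" "\<lambda>_. k" "\<lambda>_. f"] assms by (simp add: mult.commute)

lemma poly_fun_mono_val:
  assumes "finite A" "finite B" "\<And>b. b \<in> B \<Longrightarrow> poly_fun A k (\<lambda>x. \<Phi> x b)"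
  shows "poly_fun A (k * sum e B) (\<lambda>x. mono_val B e (\<Phi> x))"
  unfolding mono_val_def sum_distrib_left
  by (rule poly_fun_prod[OF assms(1,2)]) (use poly_fun_power[OF assms(1)] assms(3) in auto)

lemma mono_val_sum_slice_eq_0:
  fixes c :: "('v \<Rightarrow> nat) \<Rightarrow> 'a::{idom,ring_char_0}"
  assumes "finite A" "a \<notin> A" "finite E"
    and zero: "\<And>x. (\<Sum>e\<in>E. c e * mono_val (insert a A) e x) = 0"
  shows "(\<Sum>e\<in>{e\<in>E. e a = m}. c e * mono_val A e x) = 0"
proof -
  define Q where "Q = (\<Sum>e\<in>E. monom (c e * mono_val A e x) (e a))"
  have "poly Q z = (\<Sum>e\<in>E. c e * mono_val (insert a A) e (x(a := z)))" for z
    unfolding Q_def poly_sum poly_monom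
  proof (rule sum.cong[OF refl])
    fix e
    have "mono_val A e (x(a := z)) = mono_val A e x" using assms(2) by (intro mono_val_cong) auto
    then show "c e * mono_val A e x * z ^ e a = c e * mono_val (insert a A) e (x(a := z))"
      using assms(1,2) by (simp add: mono_val_insert)
  qed
  then have "Q = 0" using zero poly_all_0_iff_0 by metis
  then have "0 = coeff Q m" by simp
  also have "\<dots> = (\<Sum>e\<in>E. if e a = m then c e * mono_val A e x else 0)"
    unfolding Q_def coeff_sum coeff_monom by (rule sum.cong) auto
  also have "\<dots> = (\<Sum>e\<in>{e\<in>E. e a = m}. c e * mono_val A e x)"
    using assms(3) by (simp add: sum.inter_filter)
  finally show ?thesis by simp
qed

lemma mono_val_sum_eq_0_coeffs:
  fixes c :: "('v \<Rightarrow> nat) \<Rightarrow> 'a::{idom,ring_char_0}"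
  assumes "finite A" "finite E" "\<forall>e\<in>E. \<forall>a. a \<notin> A \<longrightarrow> e a = 0"
    "\<And>x. (\<Sum>e\<in>E. c e * mono_val A e x) = 0"
  shows "\<forall>e\<in>E. c e = 0"
  using assms
proof (induction A arbitrary: E c rule: finite_induct)
  case empty
  then have "E \<subseteq> {\<lambda>_. 0}" by (auto simp: fun_eq_iff)
  then show ?case using empty.prems(3) by (auto simp: mono_val_def subset_singleton_iff)
next
  case (insert a A E c)
  show ?case
  proof
    fix e0 assume e0: "e0 \<in> E"
    \<comment> \<open>Fix the exponent of \<open>a\<close> and remove the variable \<open>a\<close>.\<close>
    let ?E = "{e\<in>E. e a = e0 a}"
    let ?r = "\<lambda>e::'v \<Rightarrow> nat. e(a := 0)"
    have restore: "(e(a := 0))(a := e0 a) = e" if "e \<in> ?E" for e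
      using that by (auto simp: fun_eq_iff)
    have inj: "inj_on ?r ?E" by (rule inj_on_inverseI[of _ "\<lambda>e. e(a := e0 a)"]) (rule restore)
    have "\<forall>e\<in>?r ` ?E. c (e(a := e0 a)) = 0"
    proof (rule insert.IH)
      show "finite (?r ` ?E)" using insert.prems by auto
      show "\<forall>e\<in>?r ` ?E. \<forall>b. b \<notin> A \<longrightarrow> e b = 0" using insert.prems by auto
      fix x
      have "(\<Sum>e\<in>?r ` ?E. c (e(a := e0 a)) * mono_val A e x) = (\<Sum>e\<in>?E. c e * mono_val A e x)"
        unfolding sum.reindex[OF inj, unfolded comp_def]
      proof (rule sum.cong[OF refl])
        fix e assume "e \<in> ?E"
        moreover have "mono_val A (e(a := 0)) x = mono_val A e x"
          unfolding mono_val_def using insert.hyps by (intro prod.cong) auto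
        ultimately show "c ((e(a := 0))(a := e0 a)) * mono_val A (e(a := 0)) x = c e * mono_val A e x"
          using restore[of e] by simp
      qed
      also have "\<dots> = 0"
        using mono_val_sum_slice_eq_0[OF insert.hyps(1,2) insert.prems(1,3)] by blast
      finally show "(\<Sum>e\<in>?r ` ?E. c (e(a := e0 a)) * mono_val A e x) = 0" .
    qed
    then show "c e0 = 0" using e0 restore[of e0] by fastforce
  qed
qed

lemma card_exps_le_family_lt:
  fixes k :: nat
  assumes J: "finite J" and B: "finite B" and fin_A: "\<And>j. j \<in> J \<Longrightarrow> finite (A j)"
    and card_A: "\<And>j. j \<in> J \<Longrightarrow> card (A j) \<le> m" and mB: "m < card B"
  defines "D \<equiv> card B * (card J * (k * card B + 1) ^ m)"
  shows "(\<Sum>j\<in>J. card (exps_le (A j) (k * D))) < card (exps_le B D)"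
proof -
  define M where "M = card B"
  define t where "t = card J * (k * M + 1) ^ m"
  have D: "D = M * t" unfolding D_def M_def t_def ..
  have "(\<Sum>j\<in>J. card (exps_le (A j) (k * D))) \<le> (\<Sum>j\<in>J. (k * D + 1) ^ m)"
  proof (rule sum_mono)
    fix j assume j: "j \<in> J"
    have "card (exps_le (A j) (k * D)) \<le> (k * D + 1) ^ card (A j)"
      using fin_A j card_exps_le_upper by blast
    also have "\<dots> \<le> (k * D + 1) ^ m" using card_A j by (intro power_increasing) auto
    finally show "card (exps_le (A j) (k * D)) \<le> (k * D + 1) ^ m" .
  qed
  also have "\<dots> = card J * (k * (M * t) + 1) ^ m" by (simp add: D)
  also have "\<dots> \<le> card J * ((k * M + 1) * (t + 1)) ^ m"
    by (intro mult_left_mono power_mono) (auto simp: algebra_simps)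
  also have "\<dots> = t * (t + 1) ^ m" by (metis mult.assoc power_mult_distrib t_def)
  also have "\<dots> < (t + 1) ^ Suc m" by simp
  also have "\<dots> \<le> (t + 1) ^ M" using mB M_def by (intro power_increasing) auto
  also have "\<dots> \<le> card (exps_le B D)" using card_exps_le_lower[OF B] by (simp add: D M_def mult.commute)
  finally show ?thesis .
qed

text \<open>For large \<open>D\<close> the monomials of degree \<open>\<le> D\<close> in the components outnumber all monomials
  the maps can produce, so their compositions with the maps are linearly dependent.\<close>

lemma common_annihilating_polynomial:
  fixes \<Phi> :: "'j \<Rightarrow> ('v \<Rightarrow> 'a::field) \<Rightarrow> 'w \<Rightarrow> 'a"
  assumes J: "finite J" and B: "finite B" and fin_A: "\<And>j. j \<in> J \<Longrightarrow> finite (A j)"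
    and card_A: "\<And>j. j \<in> J \<Longrightarrow> card (A j) \<le> m" and mB: "m < card B"
    and P: "\<And>j b. j \<in> J \<Longrightarrow> b \<in> B \<Longrightarrow> poly_fun (A j) k (\<lambda>x. \<Phi> j x b)"
  shows "\<exists>D c. (\<exists>e\<in>exps_le B D. c e \<noteq> 0) \<and>
     (\<forall>j\<in>J. \<forall>x. (\<Sum>e\<in>exps_le B D. c e * mono_val B e (\<Phi> j x)) = 0)"
proof -
  define D where "D = card B * (card J * (k * card B + 1) ^ m)"
  define U where "U = exps_le B D"
  define co where "co j e = (SOME cf. \<forall>x. mono_val B e (\<Phi> j x) =
      (\<Sum>\<beta>\<in>exps_le (A j) (k * D). cf \<beta> * mono_val (A j) \<beta> x))" for j e
  have co: "mono_val B e (\<Phi> j x) = (\<Sum>\<beta>\<in>exps_le (A j) (k * D). co j e \<beta> * mono_val (A j) \<beta> x)"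
    if j: "j \<in> J" and e: "e \<in> U" for j e x
  proof -
    have fin: "finite (A j)" using fin_A j .
    have "poly_fun (A j) (k * sum e B) (\<lambda>x. mono_val B e (\<Phi> j x))"
      using j by (intro poly_fun_mono_val[OF fin B]) (auto intro: P)
    moreover have "k * sum e B \<le> k * D" using e by (auto simp: U_def exps_le_def)
    ultimately have "poly_fun (A j) (k * D) (\<lambda>x. mono_val B e (\<Phi> j x))"
      by (rule poly_fun_mono[OF fin])
    then show ?thesis unfolding poly_fun_def co_def by (rule someI_ex[THEN spec])
  qed
  define Q where "Q = Sigma J (\<lambda>j. exps_le (A j) (k * D))"
  have fin_Q: "finite Q" unfolding Q_def using J fin_A finite_exps_le by (intro finite_SigmaI) auto
  have "card Q = (\<Sum>j\<in>J. card (exps_le (A j) (k * D)))"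
    unfolding Q_def using J fin_A finite_exps_le by (subst card_SigmaI) auto
  also have "\<dots> < card U"
    unfolding U_def D_def by (rule card_exps_le_family_lt[OF J B fin_A card_A mB])
  finally have "card Q < card U" .
  from underdetermined_system_nontrivial_solution[OF fin_Q finite_exps_le[OF B, of D, folded U_def] this,
      of "\<lambda>q e. co (fst q) e (snd q)"]
  obtain c where c: "\<exists>u\<in>U. c u \<noteq> 0" "\<forall>q\<in>Q. (\<Sum>e\<in>U. co (fst q) e (snd q) * c e) = 0"
    by blast
  have "(\<Sum>e\<in>U. c e * mono_val B e (\<Phi> j x)) = 0" if j: "j \<in> J" for j x
  proof -
    have "(\<Sum>e\<in>U. c e * mono_val B e (\<Phi> j x)) =
       (\<Sum>e\<in>U. c e * (\<Sum>\<beta>\<in>exps_le (A j) (k * D). co j e \<beta> * mono_val (A j) \<beta> x))"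
      using co j by (intro sum.cong) auto
    also have "\<dots> = (\<Sum>\<beta>\<in>exps_le (A j) (k * D). (\<Sum>e\<in>U. co j e \<beta> * c e) * mono_val (A j) \<beta> x)"
      unfolding sum_distrib_left sum_distrib_right by (subst sum.swap) (simp add: mult_ac)
    also have "\<dots> = 0" using c(2) j by (intro sum.neutral) (auto simp: Q_def)
    finally show ?thesis .
  qed
  then show ?thesis using c(1) unfolding U_def by blast
qed

section \<open>The Vandermonde star configuration\<close>

definition vandermonde_forms :: "nat \<Rightarrow> nat \<Rightarrow> complex" where
  "vandermonde_forms i j = of_nat i ^ j"

lemma poly_eq_sum_coeff:
  fixes p :: "'a::comm_semiring_1 poly"
  assumes "degree p \<le> n"
  shows "poly p x = (\<Sum>j\<le>n. coeff p j * x ^ j)"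
  unfolding poly_altdef by (rule sum.mono_neutral_left) (use assms in \<open>auto simp: coeff_eq_0\<close>)

lemma lin_vandermonde_forms:
  "degree p \<le> n \<Longrightarrow> lin n (vandermonde_forms i) (\<lambda>j. coeff p j) = poly p (of_nat i)"
  unfolding lin_def vandermonde_forms_def by (subst poly_eq_sum_coeff[of p n]) (auto simp: mult.commute)

lemma degree_prod_linear_le: "degree (\<Prod>k\<in>K. [:- s k, 1::'a::comm_ring_1:]) \<le> card K"
proof -
  have "degree (\<Prod>k\<in>K. [:- s k, 1::'a:]) \<le> (\<Sum>k\<in>K. degree [:- s k, 1::'a:])"
    by (cases "finite K") (use degree_prod_sum_le[of K "\<lambda>k. [:- s k, 1::'a:]"] in \<open>auto simp: o_def\<close>)
  also have "\<dots> \<le> (\<Sum>k\<in>K. 1)" by (intro sum_mono) auto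
  finally show ?thesis by simp
qed

lemma star_data_vandermonde: "star_data n r vandermonde_forms"
  unfolding star_data_def lin_indep_on_def
proof (intro allI impI ballI)
  fix S c k
  assume S: "S \<subseteq> {..<r}" "card S \<le> n + 1"
    and c: "\<forall>j\<le>n. (\<Sum>i\<in>S. c i * vandermonde_forms i j) = 0" and k: "k \<in> S"
  have fin_S: "finite S" using S finite_subset by blast
  \<comment> \<open>Pair the relation with the interpolation polynomial vanishing at the other nodes.\<close>
  define Q where "Q = (\<Prod>i\<in>S - {k}. [:- of_nat i, 1::complex:])"
  have deg_Q: "degree Q \<le> n"
    using degree_prod_linear_le[of "\<lambda>i. of_nat i :: complex" "S - {k}"] S k fin_S
    unfolding Q_def by auto
  have "0 = (\<Sum>j\<le>n. coeff Q j * (\<Sum>i\<in>S. c i * vandermonde_forms i j))" using c by simp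
  also have "\<dots> = (\<Sum>i\<in>S. c i * poly Q (of_nat i))"
    unfolding sum_distrib_left vandermonde_forms_def poly_eq_sum_coeff[OF deg_Q]
    by (subst sum.swap) (simp add: mult_ac)
  also have "\<dots> = c k * poly Q (of_nat k)"
  proof (rule sum.remove[OF fin_S k, THEN trans])
    have "poly Q (of_nat i) = 0" if "i \<in> S - {k}" for i
      unfolding Q_def poly_prod using that fin_S by (intro prod_zero) auto
    then show "c k * poly Q (of_nat k) + (\<Sum>i\<in>S - {k}. c i * poly Q (of_nat i)) =
        c k * poly Q (of_nat k)"
      by simp
  qed
  finally have "c k * poly Q (of_nat k) = 0" by simp
  moreover have "poly Q (of_nat k) \<noteq> 0" unfolding Q_def poly_prod using fin_S by auto
  ultimately show "c k = 0" by simp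
qed

definition root_point :: "nat \<Rightarrow> (nat \<Rightarrow> complex) \<Rightarrow> nat \<Rightarrow> complex" where
  "root_point n s = (\<lambda>j. coeff (\<Prod>k<n. [:- s k, 1:]) j)"

lemma root_point_in_star_cone:
  assumes sub: "s ` {..<n} \<subseteq> of_nat ` {..<r}" and inj: "inj_on s {..<n}"
  shows "root_point n s \<in> star_cone n r vandermonde_forms"
proof -
  let ?P = "\<Prod>k<n. [:- s k, 1::complex:]"
  have deg_P: "degree ?P \<le> n" using degree_prod_linear_le[of s "{..<n}"] by simp
  define S where "S = {i\<in>{..<r}. of_nat i \<in> s ` {..<n}}"
  have "s ` {..<n} \<subseteq> of_nat ` S"
  proof
    fix y assume y: "y \<in> s ` {..<n}"
    then obtain i where "i < r" "y = of_nat i" using sub by auto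
    then show "y \<in> of_nat ` S" using y unfolding S_def by auto
  qed
  then have "of_nat ` S = s ` {..<n}" unfolding S_def by auto
  moreover have "inj_on (of_nat :: nat \<Rightarrow> complex) S" by (auto intro: inj_onI)
  ultimately have "card S = card (s ` {..<n})" by (metis card_image)
  also have "\<dots> = n" using inj by (simp add: card_image)
  finally have card_S: "card S = n" .
  have "lin n (vandermonde_forms i) (root_point n s) = 0" if i: "i \<in> S" for i
  proof -
    obtain k where k: "k < n" "of_nat i = s k" using i unfolding S_def by auto
    have "lin n (vandermonde_forms i) (root_point n s) = poly ?P (of_nat i)"
      unfolding root_point_def by (rule lin_vandermonde_forms[OF deg_P])
    also have "\<dots> = 0" unfolding poly_prod using k by (intro prod_zero) auto
    finally show ?thesis .
  qed
  moreover have "\<forall>j>n. root_point n s j = 0"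
    unfolding root_point_def using deg_P by (auto intro: coeff_eq_0)
  moreover have "S \<subseteq> {..<r}" by (auto simp: S_def)
  ultimately show ?thesis unfolding star_cone_def using card_S by blast
qed

lemma star_cone_scale: "v \<in> star_cone n r l \<Longrightarrow> (\<lambda>i. t * v i) \<in> star_cone n r l"
  unfolding star_cone_def lin_def by (auto simp: sum_distrib_left[symmetric] mult_ac)

definition hcomp_eval :: "nat \<Rightarrow> cpoly \<Rightarrow> nat \<Rightarrow> (nat \<Rightarrow> complex) \<Rightarrow> complex" where
  "hcomp_eval n g e v = (\<Sum>\<beta>\<in>{\<beta>\<in>supp g. mdeg n \<beta> = e}. g \<beta> * (\<Prod>i\<le>n. v i ^ \<beta> i))"

lemma monomial_scale: "(\<Prod>i\<le>n. (t * v i) ^ \<beta> i) = t ^ mdeg n \<beta> * (\<Prod>i\<le>n. v i ^ \<beta> i)"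
  unfolding mdeg_def power_mult_distrib prod.distrib by (simp add: power_sum)

lemma hcomp_eval_scale: "hcomp_eval n g e (\<lambda>i. t * v i) = t ^ e * hcomp_eval n g e v"
  unfolding hcomp_eval_def monomial_scale sum_distrib_left by (rule sum.cong) auto

lemma hcomp_eval_cong: "(\<And>i. i \<le> n \<Longrightarrow> v i = w i) \<Longrightarrow> hcomp_eval n g e v = hcomp_eval n g e w"
  unfolding hcomp_eval_def by (intro sum.cong refl arg_cong2[where f = "(*)"] prod.cong) auto

lemma hcomp_eval_eq_0_on_cone:
  assumes g: "g \<in> polys n" and Z: "\<And>t v. v \<in> Z \<Longrightarrow> (\<lambda>i. t * v i) \<in> Z"
    and van: "\<And>v. v \<in> Z \<Longrightarrow> peval n g v = 0" and v: "v \<in> Z"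
  shows "hcomp_eval n g e v = 0"
proof -
  have fin: "finite (supp g)" using g by (auto simp: polys_def)
  define Q where "Q = (\<Sum>\<beta>\<in>supp g. monom (g \<beta> * (\<Prod>i\<le>n. v i ^ \<beta> i)) (mdeg n \<beta>))"
  have "poly Q t = peval n g (\<lambda>i. t * v i)" for t
    unfolding Q_def poly_sum poly_monom peval_def monomial_scale by (rule sum.cong) (auto simp: mult_ac)
  then have "Q = 0" using van Z v poly_all_0_iff_0 by metis
  then have "0 = coeff Q e" by simp
  also have "\<dots> = (\<Sum>\<beta>\<in>supp g. if mdeg n \<beta> = e then g \<beta> * (\<Prod>i\<le>n. v i ^ \<beta> i) else 0)"
    unfolding Q_def coeff_sum coeff_monom by (rule sum.cong) auto
  also have "\<dots> = hcomp_eval n g e v" unfolding hcomp_eval_def using fin by (simp add: sum.inter_filter)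
  finally show ?thesis by simp
qed

lemma hcomp_eval_on_line:
  assumes "finite (supp g)"
  shows "\<exists>P. degree P \<le> e \<and> (\<forall>z. hcomp_eval n g e (\<lambda>i. a i + z * b i) = poly P z)"
proof -
  let ?G = "{\<beta>\<in>supp g. mdeg n \<beta> = e}"
  define P where "P = (\<Sum>\<beta>\<in>?G. Polynomial.smult (g \<beta>) (\<Prod>i\<le>n. [:a i, b i:] ^ \<beta> i))"
  have "degree P \<le> e" unfolding P_def
  proof (rule degree_sum_le)
    fix \<beta> assume \<beta>: "\<beta> \<in> ?G"
    have "degree (\<Prod>i\<le>n. [:a i, b i:] ^ \<beta> i) \<le> (\<Sum>i\<le>n. degree ([:a i, b i:] ^ \<beta> i))"
      by (rule degree_prod_sum_le[THEN order_trans]) (auto simp: o_def)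
    also have "\<dots> \<le> (\<Sum>i\<le>n. \<beta> i)"
      by (rule sum_mono, rule order_trans[OF degree_power_le]) auto
    finally show "degree (Polynomial.smult (g \<beta>) (\<Prod>i\<le>n. [:a i, b i:] ^ \<beta> i)) \<le> e"
      using \<beta> degree_smult_le order_trans by (fastforce simp: mdeg_def)
  qed (use assms in auto)
  moreover have "hcomp_eval n g e (\<lambda>i. a i + z * b i) = poly P z" for z
    unfolding P_def hcomp_eval_def by (simp add: poly_sum poly_prod poly_power mult_ac)
  ultimately show ?thesis by blast
qed

text \<open>Free the nodes one at a time: at each step at least \<open>e + 1\<close> admissible values remain.\<close>

lemma eq_0_if_eq_0_on_distinct_nodes:
  fixes H :: "(nat \<Rightarrow> 'a::idom) \<Rightarrow> 'a"
  assumes aff: "\<And>s k. \<exists>P. degree P \<le> e \<and> (\<forall>z. H (s(k := z)) = poly P z)"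
    and T: "e + n \<le> card T"
    and base: "\<And>s. s ` {..<n} \<subseteq> T \<Longrightarrow> inj_on s {..<n} \<Longrightarrow> H s = 0"
  shows "H s = 0"
proof -
  have "\<forall>s. s ` {k..<n} \<subseteq> T \<and> inj_on s {k..<n} \<longrightarrow> H s = 0" if "k \<le> n" for k
    using that
  proof (induction k)
    case 0
    then show ?case using base by (auto simp: atLeast0LessThan)
  next
    case (Suc k)
    show ?case
    proof (intro allI impI)
      fix s assume s: "s ` {Suc k..<n} \<subseteq> T \<and> inj_on s {Suc k..<n}"
      obtain P where P: "degree P \<le> e" "\<And>z. H (s(k := z)) = poly P z" using aff[of s k] by blast
      define R where "R = T - s ` {Suc k..<n}"
      have "card (s ` {Suc k..<n}) \<le> n - Suc k" using card_image_le[of "{Suc k..<n}" s] by simp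
      then have card_R: "card R \<ge> card T - (n - Suc k)" unfolding R_def
        using diff_card_le_card_Diff[OF finite_imageI[of "{Suc k..<n}" s]]
        by (meson diff_le_mono2 finite_atLeastLessThan le_trans)
      have "poly P z = 0" if z: "z \<in> R" for z
      proof -
        have "(s(k := z)) ` {k..<n} \<subseteq> T"
          using s z Suc.prems unfolding R_def by (auto simp: image_subset_iff)
        moreover have "inj_on (s(k := z)) {k..<n}"
        proof -
          have "{k..<n} = insert k {Suc k..<n}" using Suc.prems by auto
          moreover have "inj_on (s(k := z)) {Suc k..<n}" using s by (auto simp: inj_on_def)
          moreover have "z \<notin> (s(k := z)) ` {Suc k..<n}" using z unfolding R_def by auto
          ultimately show ?thesis by auto
        qed
        ultimately have "H (s(k := z)) = 0" using Suc.IH Suc.prems by auto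
        then show ?thesis using P by simp
      qed
      then have "P = 0"
        using poly_eqI_degree[of R P 0] P(1) card_R T Suc.prems by fastforce
      then show "H s = 0" using P(2)[of "s k"] by simp
    qed
  qed
  then show ?thesis by fastforce
qed

lemma hcomp_eval_root_point_update:
  assumes "finite (supp g)"
  shows "\<exists>P. degree P \<le> e \<and> (\<forall>z. hcomp_eval n g e (root_point n (s(k := z))) = poly P z)"
proof (cases "k < n")
  case True
  define R where "R = (\<Prod>k'\<in>{..<n} - {k}. [:- s k', 1::complex:])"
  have R: "(\<Prod>k'<n. [:- (s(k := z)) k', 1::complex:]) = R * [:- z, 1:]" for z
  proof -
    have "(\<Prod>k'<n. [:- (s(k := z)) k', 1::complex:]) =
        [:- z, 1:] * (\<Prod>k'\<in>{..<n} - {k}. [:- (s(k := z)) k', 1::complex:])"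
      using True by (subst prod.remove[of _ k]) auto
    also have "(\<Prod>k'\<in>{..<n} - {k}. [:- (s(k := z)) k', 1::complex:]) = R"
      unfolding R_def by (rule prod.cong) auto
    finally show ?thesis by (simp add: mult.commute)
  qed
  have "R * [:- z, 1:] = Polynomial.smult (- z) R + pCons 0 R" for z by simp
  then have "root_point n (s(k := z)) = (\<lambda>j. coeff (pCons 0 R) j + z * (- coeff R j))" for z
    unfolding root_point_def R by (simp add: fun_eq_iff algebra_simps)
  then show ?thesis
    using hcomp_eval_on_line[OF assms, of e n "\<lambda>j. coeff (pCons 0 R) j" "\<lambda>j. - coeff R j"] by simp
next
  case False
  then have "root_point n (s(k := z)) = root_point n s" for z
    unfolding root_point_def by (intro ext arg_cong2[where f = coeff] prod.cong) auto
  then show ?thesis by (intro exI[of _ "[:hcomp_eval n g e (root_point n s):]"]) auto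
qed

lemma hcomp_eval_root_point_eq_0:
  assumes g: "g \<in> vanishing_ideal n (star_cone n r vandermonde_forms)" and er: "e + n \<le> r"
  shows "hcomp_eval n g e (root_point n s) = 0"
proof (rule eq_0_if_eq_0_on_distinct_nodes[where H = "\<lambda>s. hcomp_eval n g e (root_point n s)"])
  have g_polys: "g \<in> polys n" and van: "\<And>v. v \<in> star_cone n r vandermonde_forms \<Longrightarrow> peval n g v = 0"
    using g by (auto simp: vanishing_ideal_def)
  then show "\<exists>P. degree P \<le> e \<and> (\<forall>z. hcomp_eval n g e (root_point n (s(k := z))) = poly P z)" for s k
    by (intro hcomp_eval_root_point_update) (auto simp: polys_def)
  show "e + n \<le> card (of_nat ` {..<r} :: complex set)" using er by (simp add: card_image inj_on_def)
  show "hcomp_eval n g e (root_point n s) = 0" if "s ` {..<n} \<subseteq> of_nat ` {..<r}" "inj_on s {..<n}" for s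
    using hcomp_eval_eq_0_on_cone[OF g_polys star_cone_scale van root_point_in_star_cone[OF that]] .
qed

lemma hcomp_eval_vandermonde_ideal_monic_eq_0:
  assumes g: "g \<in> vanishing_ideal n (star_cone n r vandermonde_forms)" and er: "e + n \<le> r"
    and w: "w n = 1"
  shows "hcomp_eval n g e w = 0"
proof -
  \<comment> \<open>\<open>w\<close> is the coefficient vector of a monic polynomial, which splits.\<close>
  define p where "p = (\<Sum>j\<le>n. monom (w j) j)"
  have coeff_p: "coeff p j = (if j \<le> n then w j else 0)" for j
    unfolding p_def coeff_sum coeff_monom by (cases "j \<le> n") auto
  have "degree p = n"
    by (intro antisym degree_le le_degree) (auto simp: coeff_p w)
  moreover obtain root where "Polynomial.smult (lead_coeff p) (\<Prod>i<degree p. [:- root i, 1:]) = p"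
    by (rule complex_poly_decompose')
  ultimately have "(\<Prod>i<n. [:- root i, 1:]) = p" using coeff_p w by simp
  then have "hcomp_eval n g e w = hcomp_eval n g e (root_point n root)"
    by (intro hcomp_eval_cong) (simp add: root_point_def coeff_p)
  also have "\<dots> = 0" by (rule hcomp_eval_root_point_eq_0[OF g er])
  finally show ?thesis .
qed

lemma hcomp_eval_vandermonde_ideal_eq_0:
  assumes g: "g \<in> vanishing_ideal n (star_cone n r vandermonde_forms)" and er: "e + n \<le> r"
  shows "hcomp_eval n g e v = 0"
proof -
  have fin: "finite (supp g)" using g by (auto simp: polys_def vanishing_ideal_def)
  have nonzero_last: "hcomp_eval n g e w = 0" if "w n \<noteq> 0" for w
  proof -
    have "hcomp_eval n g e w = hcomp_eval n g e (\<lambda>i. w n * (w i / w n))" using that by simp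
    also have "\<dots> = w n ^ e * hcomp_eval n g e (\<lambda>i. w i / w n)" by (rule hcomp_eval_scale)
    also have "hcomp_eval n g e (\<lambda>i. w i / w n) = 0"
      using that by (intro hcomp_eval_vandermonde_ideal_monic_eq_0[OF g er]) simp
    finally show ?thesis by simp
  qed
  \<comment> \<open>The remaining vectors are limits along a line: the polynomial on it has infinitely many roots.\<close>
  obtain P where P: "\<And>z. hcomp_eval n g e (\<lambda>i. v i + z * of_bool (i = n)) = poly P z"
    using hcomp_eval_on_line[OF fin, of e n v "\<lambda>i. of_bool (i = n)"] by blast
  show ?thesis
  proof (cases "v n = 0")
    case True
    have "poly P z = 0" if "z \<noteq> 0" for z
      using P[of z, symmetric] nonzero_last[of "\<lambda>i. v i + z * of_bool (i = n)"] that True by simp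
    then have "UNIV - {0} \<subseteq> {z. poly P z = 0}" by auto
    moreover have "infinite (UNIV - {0::complex})" by (simp add: infinite_UNIV_char_0)
    ultimately have "P = 0" using poly_roots_finite finite_subset by blast
    then show ?thesis using P[of 0] by simp
  qed (rule nonzero_last)
qed

lemma vandermonde_ideal_low_degree:
  assumes g: "g \<in> vanishing_ideal n (star_cone n r vandermonde_forms)" and \<beta>: "\<beta> \<in> supp g"
  shows "r < mdeg n \<beta> + n"
proof (rule ccontr)
  assume "\<not> ?thesis"
  then have er: "mdeg n \<beta> + n \<le> r" by simp
  have g_polys: "g \<in> polys n" using g by (auto simp: vanishing_ideal_def)
  let ?E = "{\<beta>'\<in>supp g. mdeg n \<beta>' = mdeg n \<beta>}"
  have "\<forall>\<beta>'\<in>?E. g \<beta>' = 0"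
  proof (rule mono_val_sum_eq_0_coeffs[of "{..n}"])
    show "finite ?E" using g_polys by (auto simp: polys_def)
    show "\<forall>e\<in>?E. \<forall>a. a \<notin> {..n} \<longrightarrow> e a = 0" using g_polys by (auto simp: polys_def mons_def)
    show "(\<Sum>\<beta>'\<in>?E. g \<beta>' * mono_val {..n} \<beta>' x) = 0" for x
      using hcomp_eval_vandermonde_ideal_eq_0[OF g er] unfolding hcomp_eval_def mono_val_def by simp
  qed simp
  then show False using \<beta> by (auto simp: supp_def)
qed

lemma mdeg_add: "mdeg n (\<lambda>i. \<beta> i + \<gamma> i) = mdeg n \<beta> + mdeg n \<gamma>"
  unfolding mdeg_def by (simp add: sum.distrib)

lemma has_apolar_star_vandermonde:
  assumes "d + n \<le> r" and F: "F \<in> forms n d"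
  shows "has_apolar_star n r F"
  unfolding has_apolar_star_def
proof (intro exI[of _ vandermonde_forms] conjI star_data_vandermonde subsetI)
  fix g assume g: "g \<in> vanishing_ideal n (star_cone n r vandermonde_forms)"
  have "g \<beta> * F (\<lambda>i. \<beta> i + \<gamma> i) = 0" if \<beta>: "\<beta> \<in> supp g" for \<beta> \<gamma>
  proof (cases "F (\<lambda>i. \<beta> i + \<gamma> i) = 0")
    case False
    then have "mdeg n \<beta> + mdeg n \<gamma> = d"
      using F by (auto simp: forms_def supp_def mdeg_add)
    then show ?thesis using vandermonde_ideal_low_degree[OF g \<beta>] assms(1) by simp
  qed simp
  then have "contract n g F \<gamma> = 0" for \<gamma>
    unfolding contract_def by (intro sum.neutral) simp
  then show "g \<in> perp n F" using g by (auto simp: perp_def vanishing_ideal_def)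
qed

section \<open>The points of a star configuration\<close>

definition set_nth :: "nat set \<Rightarrow> nat \<Rightarrow> nat" where
  "set_nth S k = sorted_list_of_set S ! k"

lemma bij_betw_set_nth:
  assumes "finite S" "card S = n"
  shows "bij_betw (set_nth S) {..<n} S"
proof -
  let ?xs = "sorted_list_of_set S"
  have "distinct ?xs" "length ?xs = n" "set ?xs = S" using assms by auto
  then show ?thesis
    unfolding set_nth_def bij_betw_def by (auto intro!: inj_onI simp: nth_eq_iff_index_eq set_conv_nth)
qed

lemma set_nth_in: "finite S \<Longrightarrow> card S = n \<Longrightarrow> k < n \<Longrightarrow> set_nth S k \<in> S"
  using bij_betw_set_nth bij_betwE by blast

lemma set_nth_surj: "finite S \<Longrightarrow> card S = n \<Longrightarrow> i \<in> S \<Longrightarrow> \<exists>k<n. set_nth S k = i"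
  using bij_betw_set_nth[of S n] unfolding bij_betw_def by (metis imageE lessThan_iff)

lemma lin_indep_on_set_nth:
  assumes ind: "lin_indep_on n l S" and "finite S" "card S = m"
    and z: "\<And>j. j \<le> n \<Longrightarrow> (\<Sum>a<m. v a * l (set_nth S a) j) = 0" and a: "a < m"
  shows "v a = 0"
proof -
  have bij: "bij_betw (set_nth S) {..<m} S" by (rule bij_betw_set_nth[OF assms(2,3)])
  define c where "c = (\<lambda>i. v (the_inv_into {..<m} (set_nth S) i))"
  have inv: "the_inv_into {..<m} (set_nth S) (set_nth S b) = b" if "b < m" for b
    using that bij by (simp add: the_inv_into_f_f bij_betw_def)
  have "(\<Sum>i\<in>S. c i * l i j) = 0" if j: "j \<le> n" for j
  proof -
    have "(\<Sum>i\<in>S. c i * l i j) = (\<Sum>b<m. c (set_nth S b) * l (set_nth S b) j)"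
      using sum.reindex_bij_betw[OF bij, of "\<lambda>i. c i * l i j"] by simp
    also have "\<dots> = (\<Sum>b<m. v b * l (set_nth S b) j)" by (rule sum.cong) (auto simp: c_def inv)
    finally show ?thesis using z[OF j] by simp
  qed
  then have "c (set_nth S a) = 0"
    using ind set_nth_in[OF assms(2,3) a] unfolding lin_indep_on_def by blast
  then show ?thesis by (simp add: c_def inv[OF a])
qed

text \<open>Expanding the determinant along the
  last row gives the point where the hyperplanes \<open>l i = 0\<close>, \<open>i \<in> S\<close>, meet (a generalised cross
  product), whose coordinates are polynomials in the entries of the \<open>l i\<close>.\<close>

definition hyperplane_matrix ::
    "nat \<Rightarrow> (nat \<Rightarrow> nat \<Rightarrow> complex) \<Rightarrow> nat set \<Rightarrow> (nat \<Rightarrow> complex) \<Rightarrow> complex mat" where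
  "hyperplane_matrix n l S u = mat (Suc n) (Suc n) (\<lambda>(a, b). if a < n then l (set_nth S a) b else u b)"

definition star_point :: "nat \<Rightarrow> (nat \<Rightarrow> nat \<Rightarrow> complex) \<Rightarrow> nat set \<Rightarrow> nat \<Rightarrow> complex" where
  "star_point n l S j = det (hyperplane_matrix n l S (\<lambda>b. of_bool (b = j)))"

lemma hyperplane_matrix_carrier: "hyperplane_matrix n l S u \<in> carrier_mat (Suc n) (Suc n)"
  unfolding hyperplane_matrix_def by simp

lemma det_hyperplane_matrix_expand:
  "det (hyperplane_matrix n l S u) =
     (\<Sum>p\<in>{p. p permutes {0..<Suc n}}. (signof p * (\<Prod>a<n. l (set_nth S a) (p a))) * u (p n))"
proof -
  have "det (hyperplane_matrix n l S u) = (\<Sum>p\<in>{p. p permutes {0..<Suc n}}.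
      signof p * (\<Prod>a = 0..<Suc n. hyperplane_matrix n l S u $$ (a, p a)))"
    by (rule det_def'[OF hyperplane_matrix_carrier])
  also have "\<dots> = (\<Sum>p\<in>{p. p permutes {0..<Suc n}}. (signof p * (\<Prod>a<n. l (set_nth S a) (p a))) * u (p n))"
  proof (rule sum.cong[OF refl])
    fix p assume "p \<in> {p. p permutes {0..<Suc n}}"
    then have p: "p a < Suc n" if "a < Suc n" for a using permutes_in_image that by fastforce
    have "(\<Prod>a = 0..<Suc n. hyperplane_matrix n l S u $$ (a, p a)) =
        (\<Prod>a = 0..<n. hyperplane_matrix n l S u $$ (a, p a)) * hyperplane_matrix n l S u $$ (n, p n)"
      by (simp add: prod.atLeast0_lessThan_Suc)
    also have "\<dots> = (\<Prod>a<n. l (set_nth S a) (p a)) * u (p n)"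
      unfolding atLeast0LessThan
      by (intro arg_cong2[where f = "(*)"] prod.cong) (auto simp: hyperplane_matrix_def p)
    finally show "signof p * (\<Prod>a = 0..<Suc n. hyperplane_matrix n l S u $$ (a, p a)) =
        (signof p * (\<Prod>a<n. l (set_nth S a) (p a))) * u (p n)"
      by (simp add: mult_ac)
  qed
  finally show ?thesis .
qed

lemma det_hyperplane_matrix: "det (hyperplane_matrix n l S u) = lin n u (star_point n l S)"
proof -
  let ?P = "{p. p permutes {0..<Suc n}}"
  let ?X = "\<lambda>p. signof p * (\<Prod>a<n. l (set_nth S a) (p a)) :: complex"
  have "lin n u (star_point n l S) = (\<Sum>p\<in>?P. ?X p * (\<Sum>j\<le>n. u j * of_bool (p n = j)))"
    unfolding lin_def star_point_def det_hyperplane_matrix_expand sum_distrib_left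
    by (subst sum.swap) (simp add: mult_ac)
  also have "\<dots> = (\<Sum>p\<in>?P. ?X p * u (p n))"
  proof (rule sum.cong[OF refl])
    fix p assume "p \<in> ?P"
    then have "p n \<in> {0..<Suc n}" using permutes_in_image[of p "{0..<Suc n}" n] by auto
    then have "p n \<le> n" by simp
    then show "?X p * (\<Sum>j\<le>n. u j * of_bool (p n = j)) = ?X p * u (p n)" by simp
  qed
  also have "\<dots> = det (hyperplane_matrix n l S u)" unfolding det_hyperplane_matrix_expand ..
  finally show ?thesis by simp
qed

lemma lin_star_point_eq_0:
  assumes "finite S" "card S = n" "i \<in> S"
  shows "lin n (l i) (star_point n l S) = 0"
proof -
  obtain k where k: "k < n" "set_nth S k = i" using set_nth_surj[OF assms] by blast
  have "det (hyperplane_matrix n l S (l i)) = 0"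
    by (rule det_identical_rows[OF hyperplane_matrix_carrier, of k n])
      (use k in \<open>auto simp: hyperplane_matrix_def row_mat\<close>)
  then show ?thesis using det_hyperplane_matrix by metis
qed

lemma hyperplane_matrix_mult_vec:
  assumes "a < Suc n"
  shows "(hyperplane_matrix n l S u *\<^sub>v vec (Suc n) z) $ a =
    (if a < n then lin n (l (set_nth S a)) z else lin n u z)"
proof -
  have "{0..<Suc n} = {..n}" by auto
  then show ?thesis using assms unfolding hyperplane_matrix_def lin_def by (auto simp: scalar_prod_def)
qed

lemma det_hyperplane_matrix_eq_0_dependent:
  assumes "det (hyperplane_matrix n l S u) = 0"
  shows "\<exists>w. (\<exists>a\<le>n. w a \<noteq> 0) \<and> (\<forall>j\<le>n. (\<Sum>a<n. w a * l (set_nth S a) j) + w n * u j = 0)"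
proof -
  let ?B = "hyperplane_matrix n l S u"
  have "det (transpose_mat ?B) = 0" using assms det_transpose[OF hyperplane_matrix_carrier] by simp
  then obtain v where v: "v \<in> carrier_vec (Suc n)" "v \<noteq> 0\<^sub>v (Suc n)" "transpose_mat ?B *\<^sub>v v = 0\<^sub>v (Suc n)"
    using det_0_iff_vec_prod_zero[of "transpose_mat ?B" "Suc n"] hyperplane_matrix_carrier by auto
  have "\<exists>a\<le>n. v $ a \<noteq> 0"
    using v(1,2) by (auto simp: vec_eq_iff less_Suc_eq_le)
  moreover have "(\<Sum>a<n. v $ a * l (set_nth S a) j) + v $ n * u j = 0" if "j \<le> n" for j
  proof -
    have "0 = (transpose_mat ?B *\<^sub>v v) $ j" using v(3) that by simp
    also have "\<dots> = (\<Sum>a\<in>{0..<Suc n}. ?B $$ (a, j) * v $ a)"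
      using that v(1) by (simp add: scalar_prod_def row_def hyperplane_matrix_def)
    also have "\<dots> = (\<Sum>a<n. v $ a * l (set_nth S a) j) + v $ n * u j"
      unfolding sum.atLeast0_lessThan_Suc atLeast0LessThan
      using that by (auto simp: hyperplane_matrix_def mult.commute intro!: sum.cong)
    finally show ?thesis by simp
  qed
  ultimately show ?thesis by blast
qed

text \<open>If every such determinant vanished, each unit vector would lie in the span of the \<open>n\<close>
  forms \<open>l i\<close>, \<open>i \<in> S\<close>.\<close>

lemma exists_det_hyperplane_matrix_nonzero:
  assumes ind: "lin_indep_on n l S" and fin_S: "finite S" and card_S: "card S = n"
  shows "\<exists>u. det (hyperplane_matrix n l S u) \<noteq> 0"
proof (rule ccontr)
  assume "\<not> ?thesis"
  then have "\<exists>w. (\<exists>a\<le>n. w a \<noteq> 0) \<and>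
      (\<forall>j\<le>n. (\<Sum>a<n. w a * l (set_nth S a) j) + w n * of_bool (k = j) = 0)" for k
    using det_hyperplane_matrix_eq_0_dependent[of n l S "\<lambda>j. of_bool (k = j)"] by blast
  then obtain W where W_nz: "\<And>k. \<exists>a\<le>n. W k a \<noteq> 0"
    and W: "\<And>k j. j \<le> n \<Longrightarrow> (\<Sum>a<n. W k a * l (set_nth S a) j) + W k n * of_bool (k = j) = 0"
    by metis
  have W_last: "W k n \<noteq> 0" for k
  proof
    assume W0: "W k n = 0"
    then have "W k a = 0" if "a \<le> n" for a
      using lin_indep_on_set_nth[OF ind fin_S card_S _, of "W k" a] W[of _ k] that
      by (cases "a = n") auto
    then show False using W_nz by blast
  qed
  define M where "M = (\<lambda>k a. - W k a / W k n)"
  have unit: "of_bool (k = j) = (\<Sum>a<n. M k a * l (set_nth S a) j)" if "j \<le> n" for k j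
  proof -
    have "of_bool (k = j) = - (\<Sum>a<n. W k a * l (set_nth S a) j) / W k n"
      using W[OF that, of k] W_last[of k] by (simp add: field_simps add_eq_0_iff)
    then show ?thesis unfolding M_def sum_divide_distrib sum_negf[symmetric] by simp
  qed
  have "card {..<n} < card {..n}" by simp
  from underdetermined_system_nontrivial_solution[OF finite_lessThan finite_atMost this, of "\<lambda>a k. M k a"]
  obtain y where y: "\<exists>k\<in>{..n}. y k \<noteq> 0" "\<forall>a\<in>{..<n}. (\<Sum>k\<le>n. M k a * y k) = 0" by blast
  have "y j = 0" if j: "j \<le> n" for j
  proof -
    have "y j = (\<Sum>k\<le>n. y k * of_bool (k = j))" using j by simp
    also have "\<dots> = (\<Sum>a<n. l (set_nth S a) j * (\<Sum>k\<le>n. M k a * y k))"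
      unfolding unit[OF j] sum_distrib_left by (subst sum.swap) (simp add: mult_ac)
    also have "\<dots> = 0" using y(2) by simp
    finally show ?thesis .
  qed
  then show False using y(1) by auto
qed

lemma common_zero_multiple_star_point:
  assumes ind: "lin_indep_on n l S" and fin_S: "finite S" and card_S: "card S = n"
    and v: "\<And>i. i \<in> S \<Longrightarrow> lin n (l i) v = 0"
  shows "\<exists>t. \<forall>j\<le>n. v j = t * star_point n l S j"
proof -
  let ?p = "star_point n l S"
  obtain u where D: "det (hyperplane_matrix n l S u) \<noteq> 0"
    using exists_det_hyperplane_matrix_nonzero[OF assms(1-3)] by blast
  define Dv where "Dv = lin n u ?p"
  define z where "z = (\<lambda>j. Dv * v j - lin n u v * ?p j)"
  have lin_z: "lin n f z = Dv * lin n f v - lin n u v * lin n f ?p" for f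
    unfolding z_def lin_def by (simp add: algebra_simps sum_subtractf sum_distrib_left)
  have "hyperplane_matrix n l S u *\<^sub>v vec (Suc n) z = 0\<^sub>v (Suc n)"
  proof (rule eq_vecI)
    fix a assume "a < dim_vec (0\<^sub>v (Suc n) :: complex vec)"
    then show "(hyperplane_matrix n l S u *\<^sub>v vec (Suc n) z) $ a = 0\<^sub>v (Suc n) $ a"
      using v lin_star_point_eq_0[OF fin_S card_S] set_nth_in[OF fin_S card_S]
      by (auto simp: hyperplane_matrix_mult_vec lin_z Dv_def mult.commute)
  qed (simp add: hyperplane_matrix_def)
  then have "vec (Suc n) z = 0\<^sub>v (Suc n)"
    using D det_0_iff_vec_prod_zero[OF hyperplane_matrix_carrier] by force
  then have "z j = 0" if "j \<le> n" for j
    using that by (metis index_vec index_zero_vec(1) less_Suc_eq_le)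
  moreover have "Dv \<noteq> 0" using D det_hyperplane_matrix unfolding Dv_def by metis
  ultimately have "v j = (lin n u v / Dv) * ?p j" if "j \<le> n" for j
    using that unfolding z_def by (simp add: field_simps)
  then show ?thesis by blast
qed

section \<open>Apolar star configurations and their parameters\<close>

definition degree_monos :: "nat \<Rightarrow> nat \<Rightarrow> expo set" where
  "degree_monos n d = {\<alpha>\<in>mons n. mdeg n \<alpha> = d}"

lemma degree_monos_subset_box: "degree_monos n d \<subseteq> exps_box {..n} d"
proof
  fix \<alpha> assume \<alpha>: "\<alpha> \<in> degree_monos n d"
  have "\<alpha> i \<le> d" if "i \<le> n" for i
    using \<alpha> member_le_sum[of i "{..n}" \<alpha>] that by (simp add: degree_monos_def mdeg_def)
  then show "\<alpha> \<in> exps_box {..n} d" using \<alpha> by (auto simp: exps_box_def degree_monos_def mons_def)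
qed

lemma finite_degree_monos: "finite (degree_monos n d)"
  using finite_subset[OF degree_monos_subset_box finite_exps_box] by blast

definition star_subsets :: "nat \<Rightarrow> nat \<Rightarrow> nat set set" where
  "star_subsets n r = {S. S \<subseteq> {..<r} \<and> card S = n}"

definition mfact :: "nat \<Rightarrow> expo \<Rightarrow> complex" where
  "mfact n \<alpha> = (\<Prod>i\<le>n. of_nat (fact (\<alpha> i)))"

text \<open>The coefficient of \<open>x\<^sup>\<alpha>\<close> in \<open>L\<^sup>d / d!\<close>, where \<open>L\<close> is the linear form of \<open>S\<close> corresponding to the
  point \<open>star_point n l S\<close>.\<close>

definition power_coeff :: "nat \<Rightarrow> (nat \<Rightarrow> nat \<Rightarrow> complex) \<Rightarrow> nat set \<Rightarrow> expo \<Rightarrow> complex" where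
  "power_coeff n l S \<alpha> = (\<Prod>i\<le>n. star_point n l S i ^ \<alpha> i) / mfact n \<alpha>"

lemma finite_star_subsets: "finite (star_subsets n r)"
  unfolding star_subsets_def by (rule finite_subset[of _ "Pow {..<r}"]) auto

lemma mfact_nonzero: "mfact n \<alpha> \<noteq> 0"
  unfolding mfact_def by simp

lemma contract_at_0:
  "contract n g F (\<lambda>_. 0) = (\<Sum>\<beta>\<in>supp g. g \<beta> * F \<beta> * mfact n \<beta>)"
  unfolding contract_def mfact_def by simp

lemma power_relation_in_vanishing_ideal:
  assumes sd: "star_data n r l"
    and h: "\<And>S. S \<in> star_subsets n r \<Longrightarrow> (\<Sum>\<alpha>\<in>degree_monos n d. h \<alpha> * power_coeff n l S \<alpha>) = 0"
  shows "(\<lambda>\<beta>. if \<beta> \<in> degree_monos n d then h \<beta> / mfact n \<beta> else 0) \<in> vanishing_ideal n (star_cone n r l)"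
    (is "?g \<in> _")
proof -
  have supp_g: "supp ?g \<subseteq> degree_monos n d" unfolding supp_def by auto
  then have "supp ?g \<subseteq> mons n" by (auto simp: degree_monos_def)
  then have "?g \<in> polys n" using finite_subset[OF supp_g finite_degree_monos] by (simp add: polys_def)
  moreover have "peval n ?g v = 0" if v_cone: "v \<in> star_cone n r l" for v
  proof -
    obtain S where S: "S \<subseteq> {..<r}" "card S = n" and v: "\<And>i. i \<in> S \<Longrightarrow> lin n (l i) v = 0"
      using v_cone unfolding star_cone_def by blast
    have fin_S: "finite S" using S(1) by (rule finite_subset) simp
    have ind: "lin_indep_on n l S" using sd S unfolding star_data_def by auto
    obtain t where t: "\<And>j. j \<le> n \<Longrightarrow> v j = t * star_point n l S j"
      using common_zero_multiple_star_point[OF ind fin_S S(2), of v] v by blast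
    have "peval n ?g v = (\<Sum>\<beta>\<in>degree_monos n d. ?g \<beta> * (\<Prod>i\<le>n. v i ^ \<beta> i))"
      unfolding peval_def by (rule sum.mono_neutral_left[OF finite_degree_monos supp_g]) (auto simp: supp_def)
    also have "\<dots> = (\<Sum>\<beta>\<in>degree_monos n d. t ^ d * (h \<beta> * power_coeff n l S \<beta>))"
    proof (rule sum.cong[OF refl])
      fix \<beta> assume \<beta>: "\<beta> \<in> degree_monos n d"
      have "(\<Prod>i\<le>n. v i ^ \<beta> i) = (\<Prod>i\<le>n. (t * star_point n l S i) ^ \<beta> i)"
        using t by (intro prod.cong) auto
      also have "\<dots> = t ^ d * (\<Prod>i\<le>n. star_point n l S i ^ \<beta> i)"
        unfolding monomial_scale using \<beta> by (simp add: degree_monos_def)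
      finally show "?g \<beta> * (\<Prod>i\<le>n. v i ^ \<beta> i) = t ^ d * (h \<beta> * power_coeff n l S \<beta>)"
        using \<beta> by (simp add: power_coeff_def)
    qed
    also have "\<dots> = t ^ d * (\<Sum>\<beta>\<in>degree_monos n d. h \<beta> * power_coeff n l S \<beta>)"
      by (rule sum_distrib_left[symmetric])
    also have "\<dots> = 0" using h S by (simp add: star_subsets_def)
    finally show ?thesis .
  qed
  ultimately show ?thesis unfolding vanishing_ideal_def by blast
qed

lemma apolar_star_span_powers:
  assumes sd: "star_data n r l" and ap: "vanishing_ideal n (star_cone n r l) \<subseteq> perp n F"
  shows "\<exists>c. \<forall>\<alpha>\<in>degree_monos n d. F \<alpha> = (\<Sum>S\<in>star_subsets n r. c S * power_coeff n l S \<alpha>)"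
  using in_span_or_separating_functional[OF finite_star_subsets finite_degree_monos,
      where F = F and w = "power_coeff n l"]
proof
  assume "\<exists>h. (\<forall>S\<in>star_subsets n r. (\<Sum>\<alpha>\<in>degree_monos n d. h \<alpha> * power_coeff n l S \<alpha>) = 0) \<and>
    (\<Sum>\<alpha>\<in>degree_monos n d. h \<alpha> * F \<alpha>) \<noteq> 0"
  then obtain h where h: "\<And>S. S \<in> star_subsets n r \<Longrightarrow> (\<Sum>\<alpha>\<in>degree_monos n d. h \<alpha> * power_coeff n l S \<alpha>) = 0"
    and hF: "(\<Sum>\<alpha>\<in>degree_monos n d. h \<alpha> * F \<alpha>) \<noteq> 0"
    by blast
  let ?g = "\<lambda>\<beta>. if \<beta> \<in> degree_monos n d then h \<beta> / mfact n \<beta> else 0"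
  have supp_g: "supp ?g \<subseteq> degree_monos n d" unfolding supp_def by auto
  have "?g \<in> perp n F" using power_relation_in_vanishing_ideal[OF sd h] ap by blast
  then have "0 = contract n ?g F (\<lambda>_. 0)" by (simp add: perp_def)
  also have "\<dots> = (\<Sum>\<beta>\<in>degree_monos n d. ?g \<beta> * F \<beta> * mfact n \<beta>)"
    unfolding contract_at_0 by (rule sum.mono_neutral_left[OF finite_degree_monos supp_g]) (auto simp: supp_def)
  also have "\<dots> = (\<Sum>\<alpha>\<in>degree_monos n d. h \<alpha> * F \<alpha>)"
    by (rule sum.cong) (auto simp: mfact_nonzero)
  finally show ?thesis using hF by simp
qed

lemma star_data_nonzero:
  assumes "star_data n r l" "i < r"
  shows "\<exists>j\<le>n. l i j \<noteq> 0"
proof (rule ccontr)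
  assume zero: "\<not> ?thesis"
  have "lin_indep_on n l {i}" using assms unfolding star_data_def by simp
  then have "(\<forall>j\<le>n. (\<Sum>i'\<in>{i}. (\<lambda>_. 1::complex) i' * l i' j) = 0) \<longrightarrow>
      (\<forall>i'\<in>{i}. (\<lambda>_. 1::complex) i' = 0)"
    unfolding lin_indep_on_def by (rule spec)
  then show False using zero by simp
qed

lemma star_data_rescale:
  assumes "star_data n r l" "\<And>i. i < r \<Longrightarrow> a i \<noteq> 0"
  shows "star_data n r (\<lambda>i j. a i * l i j)"
  unfolding star_data_def lin_indep_on_def
proof (intro allI impI ballI)
  fix S c i assume S: "S \<subseteq> {..<r}" "card S \<le> n + 1"
    and c: "\<forall>j\<le>n. (\<Sum>i\<in>S. c i * (a i * l i j)) = 0" and i: "i \<in> S"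
  have "\<forall>j\<le>n. (\<Sum>i\<in>S. (c i * a i) * l i j) = 0" using c by (simp add: mult.assoc)
  moreover have "lin_indep_on n l S" using assms(1) S unfolding star_data_def by simp
  then have "(\<forall>j\<le>n. (\<Sum>i\<in>S. (\<lambda>i. c i * a i) i * l i j) = 0) \<longrightarrow>
      (\<forall>i\<in>S. (\<lambda>i. c i * a i) i = 0)"
    unfolding lin_indep_on_def by (rule spec)
  ultimately have "\<forall>i\<in>S. c i * a i = 0" by simp
  then show "c i = 0" using i S assms(2) by auto
qed

lemma star_cone_rescale:
  assumes "\<And>i. i < r \<Longrightarrow> a i \<noteq> 0"
  shows "star_cone n r (\<lambda>i j. a i * l i j) = star_cone n r l"
proof -
  have "lin n (\<lambda>j. a i * l i j) v = 0 \<longleftrightarrow> lin n (l i) v = 0" if "i < r" for i v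
    unfolding lin_def using assms[OF that] by (simp add: sum_distrib_left[symmetric] mult.assoc)
  then have "(\<forall>i\<in>S. lin n (\<lambda>j. a i * l i j) v = 0) \<longleftrightarrow> (\<forall>i\<in>S. lin n (l i) v = 0)"
    if "S \<subseteq> {..<r}" for S v
    using that by blast
  then show ?thesis unfolding star_cone_def by (intro Collect_cong) metis
qed

text \<open>Parameters for the forms \<open>\<Sum>\<^sub>S c\<^sub>S L\<^sub>S\<^sup>d\<close>: \<open>Inl (i, j)\<close> is the coefficient \<open>j\<close> of \<open>l i\<close>, whose
  coefficient \<open>jc i\<close> is normalised to \<open>1\<close>, and \<open>Inr S\<close> is \<open>c\<^sub>S\<close>.\<close>

definition normalized_forms ::
    "(nat \<Rightarrow> nat) \<Rightarrow> ((nat \<times> nat) + nat set \<Rightarrow> complex) \<Rightarrow> nat \<Rightarrow> nat \<Rightarrow> complex" where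
  "normalized_forms jc x i j = (if j = jc i then 1 else x (Inl (i, j)))"

definition param_vars :: "nat \<Rightarrow> nat \<Rightarrow> (nat \<Rightarrow> nat) \<Rightarrow> ((nat \<times> nat) + nat set) set" where
  "param_vars n r jc = Inl ` (SIGMA i:{..<r}. {..n} - {jc i}) \<union> Inr ` star_subsets n r"

definition param_form ::
    "nat \<Rightarrow> nat \<Rightarrow> (nat \<Rightarrow> nat) \<Rightarrow> ((nat \<times> nat) + nat set \<Rightarrow> complex) \<Rightarrow> expo \<Rightarrow> complex" where
  "param_form n r jc x \<alpha> =
     (\<Sum>S\<in>star_subsets n r. x (Inr S) * power_coeff n (normalized_forms jc x) S \<alpha>)"

lemma star_point_cong:
  assumes "finite S" "card S = n" "\<And>i j. i \<in> S \<Longrightarrow> j \<le> n \<Longrightarrow> l i j = l' i j"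
  shows "star_point n l S = star_point n l' S"
proof -
  have "hyperplane_matrix n l S u = hyperplane_matrix n l' S u" for u
    unfolding hyperplane_matrix_def using assms set_nth_in[OF assms(1,2)] by (intro eq_matI) auto
  then show ?thesis unfolding star_point_def by (simp add: fun_eq_iff)
qed

lemma has_apolar_star_param_form:
  assumes "has_apolar_star n r F"
  shows "\<exists>jc\<in>PiE {..<r} (\<lambda>_. {..n}). \<exists>x. \<forall>\<alpha>\<in>degree_monos n d. F \<alpha> = param_form n r jc x \<alpha>"
proof -
  obtain l where sd: "star_data n r l" and ap: "vanishing_ideal n (star_cone n r l) \<subseteq> perp n F"
    using assms unfolding has_apolar_star_def by blast
  have "\<forall>i. \<exists>j. i < r \<longrightarrow> j \<le> n \<and> l i j \<noteq> 0" using star_data_nonzero[OF sd] by blast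
  from choice[OF this] obtain f where f: "\<forall>i. i < r \<longrightarrow> f i \<le> n \<and> l i (f i) \<noteq> 0" ..
  define jc where "jc = restrict f {..<r}"
  define l' where "l' i j = inverse (l i (jc i)) * l i j" for i j
  have jc: "jc \<in> PiE {..<r} (\<lambda>_. {..n})" using f by (simp add: jc_def restrict_PiE_iff)
  have nz: "inverse (l i (jc i)) \<noteq> 0" if "i < r" for i using f that by (simp add: jc_def)
  have sd': "star_data n r l'" unfolding l'_def by (rule star_data_rescale[OF sd nz])
  have cone: "star_cone n r l' = star_cone n r l" unfolding l'_def by (rule star_cone_rescale[OF nz])
  obtain c where c: "\<forall>\<alpha>\<in>degree_monos n d. F \<alpha> = (\<Sum>S\<in>star_subsets n r. c S * power_coeff n l' S \<alpha>)"
    using apolar_star_span_powers[OF sd', of F d] ap cone by auto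
  define x where "x v = (case v of Inl (i, j) \<Rightarrow> l' i j | Inr S \<Rightarrow> c S)" for v
  have star_point_eq: "star_point n (normalized_forms jc x) S = star_point n l' S"
    if S: "S \<in> star_subsets n r" for S
  proof (rule star_point_cong)
    show "finite S" "card S = n"
      using S finite_subset[of S "{..<r}"] by (auto simp: star_subsets_def)
    show "normalized_forms jc x i j = l' i j" if "i \<in> S" "j \<le> n" for i j
    proof -
      have "i < r" using S that by (auto simp: star_subsets_def)
      then show ?thesis using f by (simp add: normalized_forms_def x_def l'_def jc_def)
    qed
  qed
  have "param_form n r jc x \<alpha> = (\<Sum>S\<in>star_subsets n r. c S * power_coeff n l' S \<alpha>)" for \<alpha>
    unfolding param_form_def power_coeff_def by (intro sum.cong) (simp_all add: star_point_eq x_def)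
  then show ?thesis using jc c by (intro bexI[of _ jc] exI[of _ x]) auto
qed

lemma card_star_subsets: "card (star_subsets n r) = r choose n"
  unfolding star_subsets_def using n_subsets[of "{..<r}" n] by simp

lemma card_degree_monos: "card (degree_monos n d) = (n + d) choose n"
proof -
  define L where "L = {xs::nat list. length xs = Suc n \<and> sum_list xs = d}"
  have "card L = (n + d) choose n"
    using card_length_sum_list[of "Suc n" d] binomial_symmetric[of d "n + d"]
    by (simp add: L_def add.commute)
  moreover have "bij_betw (\<lambda>\<alpha>. map \<alpha> [0..<Suc n]) (degree_monos n d) L"
  proof (rule bij_betw_byWitness[where f' = "\<lambda>xs i. if i \<le> n then xs ! i else 0"])
    have sum_map: "sum_list (map \<alpha> [0..<Suc n]) = mdeg n \<alpha>" for \<alpha>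
    proof -
      have "set [0..<Suc n] = {..n}" by auto
      then show ?thesis unfolding mdeg_def sum_set_upt_conv_sum_list_nat[symmetric] by simp
    qed
    show "\<forall>\<alpha>\<in>degree_monos n d. (\<lambda>i. if i \<le> n then map \<alpha> [0..<Suc n] ! i else 0) = \<alpha>"
      by (auto simp: degree_monos_def mons_def fun_eq_iff nth_map less_Suc_eq_le simp del: upt_Suc)
    show "\<forall>xs\<in>L. map (\<lambda>i. if i \<le> n then xs ! i else 0) [0..<Suc n] = xs"
      by (auto simp: L_def intro!: nth_equalityI simp del: upt_Suc)
    show "(\<lambda>\<alpha>. map \<alpha> [0..<Suc n]) ` degree_monos n d \<subseteq> L"
      using sum_map by (auto simp: L_def degree_monos_def simp del: upt_Suc)
    show "(\<lambda>xs i. if i \<le> n then xs ! i else 0) ` L \<subseteq> degree_monos n d"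
    proof
      fix \<alpha> assume "\<alpha> \<in> (\<lambda>xs i. if i \<le> n then xs ! i else 0) ` L"
      then obtain xs where xs: "xs \<in> L" "\<alpha> = (\<lambda>i. if i \<le> n then xs ! i else 0)" by blast
      have "mdeg n \<alpha> = (\<Sum>i<Suc n. xs ! i)" unfolding mdeg_def xs(2) lessThan_Suc_atMost by simp
      also have "\<dots> = sum_list xs" using xs(1) by (simp add: L_def sum_list_sum_nth atLeast0LessThan)
      finally show "\<alpha> \<in> degree_monos n d" using xs by (auto simp: degree_monos_def mons_def L_def)
    qed
  qed
  ultimately show ?thesis using bij_betw_same_card by metis
qed

lemma six_times_choose_3: "6 * (Suc (Suc m) choose 3) = Suc (Suc m) * Suc m * m"
proof -
  have a: "3 * (Suc (Suc m) choose 3) = Suc (Suc m) * (Suc m choose 2)"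
    using Suc_times_binomial[of 2 "Suc m"] by (simp add: numeral_eq_Suc)
  have b: "2 * (Suc m choose 2) = Suc m * m"
    using Suc_times_binomial[of 1 m] by (simp add: numeral_eq_Suc)
  have "6 * (Suc (Suc m) choose 3) = 2 * (Suc (Suc m) * (Suc m choose 2))" using a by simp
  also have "\<dots> = Suc (Suc m) * (2 * (Suc m choose 2))" by simp
  also have "\<dots> = Suc (Suc m) * (Suc m * m)" by (simp only: b)
  finally show ?thesis by (simp only: mult.assoc)
qed

text \<open>This is where \<open>d \<ge> 3\<close> and \<open>n \<ge> 6\<close> enter.\<close>

lemma count_lt_choose:
  assumes n: "6 \<le> n" and d: "3 \<le> d"
  shows "(d + n - 1) * n < (d + n - 1) choose (n - 1)"
  using d
proof (induction d rule: dec_induct)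
  case base
  have "(n + 2) choose (n - 1) = (n + 2) choose 3"
    using binomial_symmetric[of "n - 1" "n + 2"] n by simp
  moreover have "6 * ((n + 2) choose 3) = (n + 2) * (n + 1) * n"
    using six_times_choose_3[of n] by simp
  moreover have "6 * ((n + 2) * n) < (n + 2) * (n + 1) * n"
  proof -
    have "((n + 2) * n) * 6 < ((n + 2) * n) * (n + 1)" using n by (intro mult_strict_left_mono) auto
    then show ?thesis by (simp only: ac_simps)
  qed
  ultimately show ?case by (simp add: add.commute)
next
  case (step d)
  have n1: "n - 1 = Suc (n - 2)" using n by simp
  have dn: "Suc d + n - 1 = Suc (d + n - 1)" using n by simp
  have "(Suc d + n - 1) choose (n - 1) = ((d + n - 1) choose (n - 2)) + ((d + n - 1) choose (n - 1))"
    unfolding dn n1 by (rule binomial_Suc_Suc)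
  moreover have "n \<le> (d + n - 1) choose (n - 2)"
  proof -
    have "(n + 2) choose 1 \<le> (n + 2) choose 4" using n by (intro binomial_mono) auto
    also have "(n + 2) choose 4 = (n + 2) choose (n - 2)"
      using binomial_symmetric[of 4 "n + 2"] n by simp
    also have "\<dots> \<le> (d + n - 1) choose (n - 2)" using step.hyps by (intro binomial_right_mono) simp
    finally show ?thesis by simp
  qed
  moreover have "(d + n) * n = (d + n - 1) * n + n" using n by (cases "d + n") auto
  ultimately show ?case using step.IH by simp
qed

lemma param_count_lt_dim:
  assumes "6 \<le> n" "3 \<le> d" "r < d + n"
  shows "r * n + (r choose n) < (n + d) choose n"
proof -
  have "r * n + (r choose n) \<le> (d + n - 1) * n + ((d + n - 1) choose n)"
    using assms(3) by (intro add_mono mult_right_mono binomial_right_mono) auto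
  also have "\<dots> < ((d + n - 1) choose (n - 1)) + ((d + n - 1) choose n)"
    using count_lt_choose[OF assms(1,2)] by simp
  also have "\<dots> = (n + d) choose n"
    using binomial_Suc_Suc[of "d + n - 1" "n - 1"] assms(1) by (simp add: add.commute)
  finally show ?thesis .
qed

lemma card_param_vars:
  assumes jc: "jc \<in> PiE {..<r} (\<lambda>_. {..n})"
  shows "finite (param_vars n r jc)" "card (param_vars n r jc) \<le> r * n + card (star_subsets n r)"
proof -
  let ?Sg = "SIGMA i:{..<r}. {..n} - {jc i}"
  have "card ?Sg = (\<Sum>i<r. card ({..n} - {jc i}))" by (simp add: card_SigmaI)
  also have "\<dots> = (\<Sum>i<r. n)" using jc by (intro sum.cong) (auto simp: PiE_def Pi_def)
  finally have card_Sg: "card ?Sg = r * n" by simp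
  show "finite (param_vars n r jc)" using finite_star_subsets by (simp add: param_vars_def)
  have "card (param_vars n r jc) \<le> card (Inl ` ?Sg :: ((nat \<times> nat) + nat set) set) +
      card (Inr ` star_subsets n r :: ((nat \<times> nat) + nat set) set)"
    unfolding param_vars_def by (rule card_Un_le)
  also have "\<dots> \<le> card ?Sg + card (star_subsets n r)" by (intro add_mono card_image_le) (auto simp: finite_star_subsets)
  finally show "card (param_vars n r jc) \<le> r * n + card (star_subsets n r)" using card_Sg by simp
qed

lemma poly_fun_star_point:
  assumes jc: "jc \<in> PiE {..<r} (\<lambda>_. {..n})" and S: "S \<in> star_subsets n r"
  shows "poly_fun (param_vars n r jc) (Suc n) (\<lambda>x. star_point n (normalized_forms jc x) S j)"
proof -
  have fin_A: "finite (param_vars n r jc)" using card_param_vars[OF jc] by blast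
  have fin_S: "finite S" and card_S: "card S = n" and S_r: "S \<subseteq> {..<r}"
    using S finite_subset by (auto simp: star_subsets_def)
  let ?u = "\<lambda>b. of_bool (b = j) :: complex"
  let ?B = "\<lambda>x. hyperplane_matrix n (normalized_forms jc x) S ?u"
  have entry: "poly_fun (param_vars n r jc) 1 (\<lambda>x. ?B x $$ (a, b))" if "a < Suc n" "b < Suc n" for a b
  proof (cases "a < n \<and> b \<noteq> jc (set_nth S a)")
    case True
    then have "(set_nth S a, b) \<in> (SIGMA i:{..<r}. {..n} - {jc i})"
      using that set_nth_in[OF fin_S card_S, of a] S_r by auto
    then have var: "Inl (set_nth S a, b) \<in> param_vars n r jc" by (simp add: param_vars_def)
    have "(\<lambda>x. ?B x $$ (a, b)) = (\<lambda>x. x (Inl (set_nth S a, b)))"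
      using True that by (simp add: hyperplane_matrix_def normalized_forms_def)
    then show ?thesis using poly_fun_var[OF fin_A var order_refl] by simp
  next
    case False
    then have "(\<lambda>x. ?B x $$ (a, b)) = (\<lambda>x. if a < n then 1 else ?u b)"
      using that by (auto simp: hyperplane_matrix_def normalized_forms_def)
    then show ?thesis by (simp only:) (rule poly_fun_const[OF fin_A])
  qed
  have "poly_fun (param_vars n r jc) (Suc n)
      (\<lambda>x. \<Sum>p\<in>{p. p permutes {0..<Suc n}}. signof p * (\<Prod>a = 0..<Suc n. ?B x $$ (a, p a)))"
  proof (rule poly_fun_sum[OF fin_A])
    show "finite {p. p permutes {0..<Suc n}}" by (rule finite_permutations) simp
    fix p assume "p \<in> {p. p permutes {0..<Suc n}}"
    then have p: "p a < Suc n" if "a < Suc n" for a using permutes_in_image that by fastforce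
    have "poly_fun (param_vars n r jc) (\<Sum>a = 0..<Suc n. 1) (\<lambda>x. \<Prod>a = 0..<Suc n. ?B x $$ (a, p a))"
      by (rule poly_fun_prod[OF fin_A]) (use entry p in auto)
    then show "poly_fun (param_vars n r jc) (Suc n)
        (\<lambda>x. signof p * (\<Prod>a = 0..<Suc n. ?B x $$ (a, p a)))"
      using poly_fun_cmult by simp
  qed
  then show ?thesis unfolding star_point_def det_def'[OF hyperplane_matrix_carrier] .
qed

lemma poly_fun_param_form:
  assumes jc: "jc \<in> PiE {..<r} (\<lambda>_. {..n})" and \<alpha>: "\<alpha> \<in> degree_monos n d"
  shows "poly_fun (param_vars n r jc) (Suc (Suc n * d)) (\<lambda>x. param_form n r jc x \<alpha>)"
  unfolding param_form_def
proof (rule poly_fun_sum[OF _ finite_star_subsets])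
  show fin_A: "finite (param_vars n r jc)" using card_param_vars[OF jc] by blast
  fix S assume S: "S \<in> star_subsets n r"
  have "poly_fun (param_vars n r jc) (\<Sum>i\<le>n. Suc n * \<alpha> i)
      (\<lambda>x. \<Prod>i\<le>n. star_point n (normalized_forms jc x) S i ^ \<alpha> i)"
    by (rule poly_fun_prod[OF fin_A finite_atMost]) (rule poly_fun_power[OF fin_A poly_fun_star_point[OF jc S]])
  moreover have "(\<Sum>i\<le>n. Suc n * \<alpha> i) = Suc n * d"
    using \<alpha> unfolding sum_distrib_left[symmetric] by (simp only: degree_monos_def mdeg_def mem_Collect_eq)
  ultimately have "poly_fun (param_vars n r jc) (Suc n * d)
      (\<lambda>x. inverse (mfact n \<alpha>) * (\<Prod>i\<le>n. star_point n (normalized_forms jc x) S i ^ \<alpha> i))"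
    using poly_fun_cmult by simp
  moreover have "Inr S \<in> param_vars n r jc" using S by (simp add: param_vars_def)
  ultimately have "poly_fun (param_vars n r jc) (1 + Suc n * d)
      (\<lambda>x. x (Inr S) * (inverse (mfact n \<alpha>) * (\<Prod>i\<le>n. star_point n (normalized_forms jc x) S i ^ \<alpha> i)))"
    by (intro poly_fun_mult[OF fin_A] poly_fun_var[OF fin_A]) auto
  moreover have "(\<lambda>x. x (Inr S) * power_coeff n (normalized_forms jc x) S \<alpha>) =
      (\<lambda>x. x (Inr S) * (inverse (mfact n \<alpha>) * (\<Prod>i\<le>n. star_point n (normalized_forms jc x) S i ^ \<alpha> i)))"
    by (simp add: power_coeff_def divide_inverse mult.commute)
  ultimately show "poly_fun (param_vars n r jc) (Suc (Suc n * d))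
      (\<lambda>x. x (Inr S) * power_coeff n (normalized_forms jc x) S \<alpha>)"
    using poly_fun_mono[OF fin_A] by simp
qed

section \<open>Generic forms\<close>

lemma general_form_by_annihilator:
  assumes fin_E: "finite E" and E: "\<forall>e\<in>E. \<forall>\<alpha>. \<alpha> \<notin> degree_monos n d \<longrightarrow> e \<alpha> = 0"
    and c: "\<exists>e\<in>E. c e \<noteq> 0"
    and P: "\<And>F. F \<in> forms n d \<Longrightarrow> (\<Sum>e\<in>E. c e * mono_val (degree_monos n d) e F) \<noteq> 0 \<Longrightarrow> P F"
  shows "general_form n d P"
proof -
  define \<phi> where "\<phi> F = (\<Sum>e\<in>E. c e * mono_val (degree_monos n d) e F)" for F :: cpoly
  have "polyfun_on_forms n d \<phi>"
    unfolding polyfun_on_forms_def \<phi>_def mono_val_def degree_monos_def using fin_E by blast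
  then have "zariski_open_forms n d {F\<in>forms n d. \<phi> F \<noteq> 0}"
    unfolding zariski_open_forms_def by (intro exI[of _ "{\<phi>}"]) auto
  moreover obtain x where x: "\<phi> x \<noteq> 0"
    using mono_val_sum_eq_0_coeffs[OF finite_degree_monos fin_E E] c unfolding \<phi>_def by blast
  define F0 where "F0 \<alpha> = (if \<alpha> \<in> degree_monos n d then x \<alpha> else 0)" for \<alpha>
  have "supp F0 \<subseteq> degree_monos n d" unfolding supp_def F0_def by auto
  then have "F0 \<in> forms n d"
    using finite_subset[OF _ finite_degree_monos] by (auto simp: forms_def polys_def degree_monos_def)
  moreover have "\<phi> F0 = \<phi> x"
    unfolding \<phi>_def by (intro sum.cong refl arg_cong2[where f = "(*)"] mono_val_cong) (simp add: F0_def)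
  ultimately show ?thesis unfolding general_form_def using x P
    by (intro exI[of _ "{F\<in>forms n d. \<phi> F \<noteq> 0}"]) (auto simp: \<phi>_def)
qed

lemma general_form_has_apolar_star:
  assumes "d + n \<le> r"
  shows "general_form n d (\<lambda>F. has_apolar_star n r F)"
  \<comment> \<open>The constant polynomial \<open>1\<close> cuts out all of \<open>S\<^sub>d\<close>.\<close>
  by (rule general_form_by_annihilator[of "{\<lambda>_. 0}" n d "\<lambda>_. 1"])
    (auto intro: has_apolar_star_vandermonde[OF assms])

lemma general_form_no_apolar_star:
  assumes "6 \<le> n" "3 \<le> d" "r < d + n"
  shows "general_form n d (\<lambda>F. \<not> has_apolar_star n r F)"
proof -
  let ?J = "PiE {..<r} (\<lambda>_. {..n})" and ?B = "degree_monos n d"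
  have "\<exists>D c. (\<exists>e\<in>exps_le ?B D. c e \<noteq> 0) \<and>
      (\<forall>jc\<in>?J. \<forall>x. (\<Sum>e\<in>exps_le ?B D. c e * mono_val ?B e (param_form n r jc x)) = 0)"
  proof (rule common_annihilating_polynomial[where A = "param_vars n r" and k = "Suc (Suc n * d)"
        and m = "r * n + card (star_subsets n r)"])
    show "finite ?J" by (rule finite_PiE) auto
    show "finite (param_vars n r jc)" "card (param_vars n r jc) \<le> r * n + card (star_subsets n r)"
      if "jc \<in> ?J" for jc
      using card_param_vars[OF that] by auto
    show "r * n + card (star_subsets n r) < card ?B"
      unfolding card_star_subsets card_degree_monos by (rule param_count_lt_dim[OF assms])
    show "poly_fun (param_vars n r jc) (Suc (Suc n * d)) (\<lambda>x. param_form n r jc x \<alpha>)"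
      if "jc \<in> ?J" "\<alpha> \<in> ?B" for jc \<alpha>
      by (rule poly_fun_param_form[OF that])
  qed (rule finite_degree_monos)
  then obtain D c where c: "\<exists>e\<in>exps_le ?B D. c e \<noteq> 0"
    and ann: "\<forall>jc\<in>?J. \<forall>x. (\<Sum>e\<in>exps_le ?B D. c e * mono_val ?B e (param_form n r jc x)) = 0"
    by (elim exE conjE)
  have exps: "\<forall>e\<in>exps_le ?B D. \<forall>\<alpha>. \<alpha> \<notin> ?B \<longrightarrow> e \<alpha> = 0" by (simp add: exps_le_def)
  show ?thesis
  proof (rule general_form_by_annihilator[OF finite_exps_le[OF finite_degree_monos] exps c])
    fix F assume nz: "(\<Sum>e\<in>exps_le ?B D. c e * mono_val ?B e F) \<noteq> 0"
    show "\<not> has_apolar_star n r F"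
    proof
      assume "has_apolar_star n r F"
      then obtain jc x where jc: "jc \<in> ?J" and F: "\<forall>\<alpha>\<in>?B. F \<alpha> = param_form n r jc x \<alpha>"
        using has_apolar_star_param_form[of n r F d] by blast
      have "(\<Sum>e\<in>exps_le ?B D. c e * mono_val ?B e F) =
          (\<Sum>e\<in>exps_le ?B D. c e * mono_val ?B e (param_form n r jc x))"
        using F by (intro sum.cong refl arg_cong2[where f = "(*)"] mono_val_cong) auto
      then show False using nz ann jc by simp
    qed
  qed
qed

theorem theorem3p3:
  fixes d n r :: nat
  assumes "d \<ge> 3" and "n \<ge> 6"
  shows "(r < d + n \<longrightarrow> general_form n d (\<lambda>F. \<not> has_apolar_star n r F)) \<and>
         (r \<ge> d + n \<longrightarrow> general_form n d (\<lambda>F. has_apolar_star n r F))"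
  using general_form_no_apolar_star[OF assms(2,1)] general_form_has_apolar_star by auto

end
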